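(* Let $K\in\{-1,+1\}$ and consider the space form $\mathbb{R}^{n+1}(K)$ modelled as $S^n\times[0,a)$ with metric $d\rho^2+f(\rho)e$, where $e$ is the round metric on the unit sphere $S^n$ and $a=\infty$, $f=\sinh^2\rho$ if $K=-1$, while $a=\pi/2$, $f=\sin^2\rho$ if $K=+1$. Let $t(\rho)=\tanh\rho$ if $K=-1$ and $t(\rho)=\tan\rho$ if $K=+1$. Let $1\le m\le n$, let $z\in C^2(S^n)$ with $0<z<a$ be $m$-admissible, put $v(u)=t(z(u)/2)$, and let $s>0$ be a constant with $sv(u)<1$ for all $u\in S^n$. Define $$A(sv)=\frac{1+Ks^2v^2}{s(1+Kv^2)},\qquad B(sv)=K\frac{(1-s^2)v^2}{s(1+Kv^2)W(v)},\qquad W(v)=\sqrt{v^2+|\nabla' v|^2}.$$ Then $$S_m(\lambda(sv))=A^m(sv)S_m(\lambda(v))+\sum_{j=0}^{m-1}c(n,m,j)A^j(sv)B^{m-j}(sv)S_j(\lambda(v)),$$ where $c(n,m,j)$ are positive coefficients depending only on $n,m,j$. Furthermore, if $K=-1$ and $s\ge1$, or if $K=+1$ and $s\le 1$, then $$S_m(\lambda(sv(u)))\ge A^m(sv(u))S_m(\lambda(v(u)))\quad\text{for all }u\in S^n,$$ and in particular, for these choices of $s$, the function $sv$ is $m$-admissible (i.e. the radial graph of $2t^{-1}(sv)$ is $m$-admissible).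
   Context: $\nabla'$ denotes the Levi-Civita connection/gradient of $e$ on $S^n$ and $|\cdot|$ the $e$-norm. For a positive $w\in C^2(S^n)$ with $w<1$, $\lambda(w(u))=(\lambda_1,\dots,\lambda_n)$ denotes the principal curvatures at $(u,2t^{-1}(w(u)))$ of the radial graph $\{(u,2t^{-1}(w(u))):u\in S^n\}$ in $\mathbb{R}^{n+1}(K)$, computed with respect to the inner normal (pointing toward decreasing $\rho$, so geodesic spheres $\rho=\text{const}$ have positive principal curvatures); similarly $\lambda(z(u))$ for the radial graph $\{(u,z(u))\}$. $S_j(\lambda)=\sum_{i_1<\dots<i_j}\lambda_{i_1}\cdots\lambda_{i_j}$ for $j\ge1$ and $S_0=1$; $H_m=\binom{n}{m}^{-1}S_m$. $\Gamma_m$ is the connected component of $\{\lambda\in\mathbb{R}^n:H_m(\lambda)>0\}$ containing the positive cone. A positive $z\in C^2(S^n)$ is $m$-admissible if $\lambda(z(u))\in\Gamma_m$ for all $u$; $v$ (or $sv$) is called $m$-admissible if the corresponding radial graph is. *)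

theory Defs
  imports "HOL-Analysis.Analysis"
begin

text \<open>S^n is the unit sphere of R^{n+1}, modelled as real^'n with CARD('n) = n+1.
  The metric is d rho^2 + phi(rho)^2 e with phi = sinh (K=-1) or sin (K=1),
  so f = phi^2.\<close>

definition sphere_n :: "(real^'n) set" where
  "sphere_n = {u. norm u = 1}"

definition phi :: "real \<Rightarrow> real \<Rightarrow> real" where
  "phi K r = (if K = -1 then sinh r else sin r)"

definition dphi :: "real \<Rightarrow> real \<Rightarrow> real" where
  "dphi K r = (if K = -1 then cosh r else cos r)"

definition tK :: "real \<Rightarrow> real \<Rightarrow> real" where
  "tK K r = (if K = -1 then tanh r else tan r)"

definition tK_inv :: "real \<Rightarrow> real \<Rightarrow> real" where
  "tK_inv K w = (if K = -1 then artanh w else arctan w)"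

definition hext :: "(real^'n \<Rightarrow> real) \<Rightarrow> real^'n \<Rightarrow> real" where
  "hext z x = z (x /\<^sub>R norm x)"

definition egrad :: "(real^'n \<Rightarrow> real) \<Rightarrow> real^'n \<Rightarrow> real^'n" where
  "egrad F x = (\<chi> i. frechet_derivative F (at x) (axis i 1))"

definition ehess :: "(real^'n \<Rightarrow> real) \<Rightarrow> real^'n \<Rightarrow> real^'n^'n" where
  "ehess F x = (\<chi> i j. frechet_derivative (\<lambda>y. egrad F y $ i) (at x) (axis j 1))"

text \<open>z in C^2(S^n): its degree-0 homogeneous extension is C^2 on R^{n+1} minus 0.\<close>
definition C2_sphere :: "(real^'n \<Rightarrow> real) \<Rightarrow> bool" where
  "C2_sphere z \<longleftrightarrow>
     (\<forall>x. x \<noteq> 0 \<longrightarrow> hext z differentiable (at x) \<and>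
          (\<forall>i. (\<lambda>y. egrad (hext z) y $ i) differentiable (at x))) \<and>
     continuous_on (- {0}) (ehess (hext z))"

text \<open>Spherical gradient nabla' z and covariant Hessian nabla'^2 z at u in S^n
  (as a bilinear form on T_u S^n = u-perp, written as a matrix).\<close>
definition sgrad :: "(real^'n \<Rightarrow> real) \<Rightarrow> real^'n \<Rightarrow> real^'n" where
  "sgrad z u = egrad (hext z) u"

definition outer :: "real^'n \<Rightarrow> real^'n \<Rightarrow> real^'n^'n" where
  "outer a b = (\<chi> i j. a $ i * b $ j)"

definition tproj :: "real^'n \<Rightarrow> real^'n^'n" where
  "tproj u = mat 1 - outer u u"

definition shess :: "(real^'n \<Rightarrow> real) \<Rightarrow> real^'n \<Rightarrow> real^'n^'n" where
  "shess z u = tproj u ** ehess (hext z) u ** tproj u"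

text \<open>Induced metric g(X,Y) = phi^2 e(X,Y) + X z Y z and second fundamental form
  (w.r.t. the normal for which geodesic spheres have positive curvatures)
  h(X,Y) = (phi phi' e(X,Y) - nabla'^2 z(X,Y) + 2 (phi'/phi) X z Y z) / sqrt(1 + |nabla' z|^2/phi^2),
  both as bilinear forms on T_u S^n.\<close>

definition metric_mat :: "real \<Rightarrow> (real^'n \<Rightarrow> real) \<Rightarrow> real^'n \<Rightarrow> real^'n^'n" where
  "metric_mat K z u =
     (phi K (z u))\<^sup>2 *\<^sub>R tproj u + outer (sgrad z u) (sgrad z u)"

definition sff_mat :: "real \<Rightarrow> (real^'n \<Rightarrow> real) \<Rightarrow> real^'n \<Rightarrow> real^'n^'n" where
  "sff_mat K z u =
     (let r = z u; p = phi K r; dp = dphi K r; g = sgrad z u;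
          Wb = sqrt (1 + (g \<bullet> g) / p\<^sup>2)
      in (1 / Wb) *\<^sub>R ((p * dp) *\<^sub>R tproj u - shess z u + (2 * dp / p) *\<^sub>R outer g g))"

text \<open>Principal curvature n-tuples (lambda_0,...,lambda_{n-1}, padded by zeros):
  eigenvalues of h relative to g on T_u S^n, given by a basis of eigenvectors.\<close>
definition pcurv :: "real \<Rightarrow> nat \<Rightarrow> (real^'n \<Rightarrow> real) \<Rightarrow> real^'n \<Rightarrow> (nat \<Rightarrow> real) set" where
  "pcurv K n z u = {lam. (\<forall>i\<ge>n. lam i = 0) \<and>
     (\<exists>b :: nat \<Rightarrow> real^'n. inj_on b {..<n} \<and> independent (b ` {..<n}) \<and>
        (\<forall>i<n. b i \<bullet> u = 0 \<and>
               sff_mat K z u *v b i = lam i *\<^sub>R (metric_mat K z u *v b i)))}"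

definition esym :: "nat \<Rightarrow> nat \<Rightarrow> (nat \<Rightarrow> real) \<Rightarrow> real" where
  "esym n j lam = (\<Sum>I\<in>{I. I \<subseteq> {..<n} \<and> card I = j}. \<Prod>i\<in>I. lam i)"

definition Hm :: "nat \<Rightarrow> nat \<Rightarrow> (nat \<Rightarrow> real) \<Rightarrow> real" where
  "Hm n m lam = esym n m lam / real (n choose m)"

definition Rn :: "nat \<Rightarrow> (nat \<Rightarrow> real) set" where
  "Rn n = {lam. \<forall>i\<ge>n. lam i = 0}"

definition pos_cone :: "nat \<Rightarrow> (nat \<Rightarrow> real) set" where
  "pos_cone n = {lam \<in> Rn n. \<forall>i<n. lam i > 0}"

definition Gamma :: "nat \<Rightarrow> nat \<Rightarrow> (nat \<Rightarrow> real) set" where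
  "Gamma n m = (\<Union>p\<in>pos_cone n.
       connected_component_set {lam \<in> Rn n. Hm n m lam > 0} p)"

definition curvS :: "real \<Rightarrow> nat \<Rightarrow> nat \<Rightarrow> (real^'n \<Rightarrow> real) \<Rightarrow> real^'n \<Rightarrow> real" where
  "curvS K n j z u = esym n j (SOME lam. lam \<in> pcurv K n z u)"

definition admissible :: "real \<Rightarrow> nat \<Rightarrow> nat \<Rightarrow> (real^'n \<Rightarrow> real) \<Rightarrow> bool" where
  "admissible K n m z \<longleftrightarrow> (\<forall>u\<in>sphere_n. \<exists>lam \<in> pcurv K n z u. lam \<in> Gamma n m)"

definition zof :: "real \<Rightarrow> (real^'n \<Rightarrow> real) \<Rightarrow> real^'n \<Rightarrow> real" where
  "zof K w = (\<lambda>u. 2 * tK_inv K (w u))"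

definition Wv :: "(real^'n \<Rightarrow> real) \<Rightarrow> real^'n \<Rightarrow> real" where
  "Wv v u = sqrt ((v u)\<^sup>2 + (norm (sgrad v u))\<^sup>2)"

definition Acoef :: "real \<Rightarrow> real \<Rightarrow> (real^'n \<Rightarrow> real) \<Rightarrow> real^'n \<Rightarrow> real" where
  "Acoef K s v u = (1 + K * s\<^sup>2 * (v u)\<^sup>2) / (s * (1 + K * (v u)\<^sup>2))"

definition Bcoef :: "real \<Rightarrow> real \<Rightarrow> (real^'n \<Rightarrow> real) \<Rightarrow> real^'n \<Rightarrow> real" where
  "Bcoef K s v u = K * ((1 - s\<^sup>2) * (v u)\<^sup>2) / (s * (1 + K * (v u)\<^sup>2) * Wv v u)"

end

(*
  In the coordinate w = t(rho/2), multiplying w by s amounts to the reparametrization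
  rho |-> G rho = 2 t^-1 (s t(rho/2)) of the radial coordinate, and G' = phi(G)/phi. Such a
  reparametrization is conformal on the spheres rho = const, so it changes the shape operator of a
  radial graph only by a factor and a multiple of the identity: lambda_i |-> A lambda_i + B, with
  A = phi(z)/phi(G z) and B = (phi'(G z) - phi'(z)) / (phi(G z) W), which are A(sv) and B(sv).
  Expanding S_m(A lambda + B) in elementary symmetric functions gives the identity with
  c(n,m,j) = binomial(n-j, m-j). If B >= 0, every term is nonnegative on Gamma_m because
  S_j > 0 there for j <= m (Garding; proved via Rolle's theorem on prod_i (x + lambda_i)), and the
  segment from lambda to A lambda + B stays in {H_m > 0}, so sv is again m-admissible.
*)
theory Submission
  imports Defs "HOL-Computational_Algebra.Polynomial"
begin

section \<open>Elementary symmetric functions\<close>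

abbreviation ksubsets :: "nat \<Rightarrow> nat \<Rightarrow> nat set set" where
  "ksubsets n j \<equiv> {I. I \<subseteq> {..<n} \<and> card I = j}"

lemma finite_ksubsets: "finite (ksubsets n j)"
  by (rule finite_subset[of _ "Pow {..<n}"]) auto

lemma card_ksubsets_supset:
  assumes J: "J \<subseteq> {..<n}" "card J \<le> m"
  shows "card {I \<in> ksubsets n m. J \<subseteq> I} = (n - card J) choose (m - card J)"
proof -
  have fJ: "finite J" using J finite_subset by blast
  have "bij_betw (\<lambda>I. I - J) {I \<in> ksubsets n m. J \<subseteq> I}
          {K. K \<subseteq> {..<n} - J \<and> card K = m - card J}"
  proof (rule bij_betw_byWitness[where f'="\<lambda>K. K \<union> J"])
    show "(\<lambda>I. I - J) ` {I \<in> ksubsets n m. J \<subseteq> I} \<subseteq> {K. K \<subseteq> {..<n} - J \<and> card K = m - card J}"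
      using fJ by (auto intro!: card_Diff_subset)
    show "(\<lambda>K. K \<union> J) ` {K. K \<subseteq> {..<n} - J \<and> card K = m - card J} \<subseteq> {I \<in> ksubsets n m. J \<subseteq> I}"
    proof
      fix X assume "X \<in> (\<lambda>K. K \<union> J) ` {K. K \<subseteq> {..<n} - J \<and> card K = m - card J}"
      then obtain K where K: "K \<subseteq> {..<n} - J" "card K = m - card J" and X: "X = K \<union> J" by auto
      have "card (K \<union> J) = card K + card J"
        using K fJ finite_subset[OF K(1)] by (subst card_Un_disjoint) auto
      then show "X \<in> {I \<in> ksubsets n m. J \<subseteq> I}" using K J X by auto
    qed
  qed auto
  then have "card {I \<in> ksubsets n m. J \<subseteq> I} = card {K. K \<subseteq> {..<n} - J \<and> card K = m - card J}"
    by (rule bij_betw_same_card)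
  also have "\<dots> = card ({..<n} - J) choose (m - card J)"
    by (rule n_subsets) auto
  also have "card ({..<n} - J) = n - card J"
    using J fJ by (simp add: card_Diff_subset)
  finally show ?thesis .
qed

lemma prod_affine:
  fixes a b :: "'a::comm_semiring_1"
  assumes "finite I"
  shows "(\<Prod>i\<in>I. a * f i + b) = (\<Sum>J\<in>Pow I. a ^ card J * prod f J * b ^ (card I - card J))"
proof -
  have "(\<Prod>i\<in>I. a * f i + b) = (\<Sum>J\<in>Pow I. (\<Prod>i\<in>J. a * f i) * (\<Prod>i\<in>I - J. b))"
    by (rule prod_add[OF assms])
  also have "\<dots> = (\<Sum>J\<in>Pow I. a ^ card J * prod f J * b ^ (card I - card J))"
    using assms by (intro sum.cong refl) (simp add: card_Diff_subset finite_subset prod.distrib)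
  finally show ?thesis .
qed

lemma esym_affine:
  fixes a b :: real
  shows "esym n m (\<lambda>i. a * f i + b) =
     (\<Sum>j\<le>m. real ((n - j) choose (m - j)) * a ^ j * b ^ (m - j) * esym n j f)"
proof -
  define T where "T = {J. J \<subseteq> {..<n} \<and> card J \<le> m}"
  define h where "h J = a ^ card J * prod f J * b ^ (m - card J)" for J :: "nat set"
  have fT: "finite T" unfolding T_def by (rule finite_subset[of _ "Pow {..<n}"]) auto
  have "esym n m (\<lambda>i. a * f i + b) = (\<Sum>I\<in>ksubsets n m. \<Sum>J\<in>Pow I. h J)"
    unfolding esym_def h_def by (intro sum.cong refl) (auto dest: finite_subset simp: prod_affine)
  also have "\<dots> = (\<Sum>I\<in>ksubsets n m. \<Sum>J\<in>T. if J \<subseteq> I then h J else 0)"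
  proof (rule sum.cong[OF refl])
    fix I assume I: "I \<in> ksubsets n m"
    then have "Pow I = {J \<in> T. J \<subseteq> I}" unfolding T_def
      by (auto intro: card_mono dest: finite_subset)
    then show "(\<Sum>J\<in>Pow I. h J) = (\<Sum>J\<in>T. if J \<subseteq> I then h J else 0)"
      using fT by (simp add: sum.inter_filter)
  qed
  also have "\<dots> = (\<Sum>J\<in>T. \<Sum>I\<in>ksubsets n m. if J \<subseteq> I then h J else 0)"
    by (rule sum.swap)
  also have "\<dots> = (\<Sum>J\<in>T. real ((n - card J) choose (m - card J)) * h J)"
  proof (rule sum.cong[OF refl])
    fix J assume J: "J \<in> T"
    have "(\<Sum>I\<in>ksubsets n m. if J \<subseteq> I then h J else 0) = real (card {I \<in> ksubsets n m. J \<subseteq> I}) * h J"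
      by (simp add: sum.inter_filter[OF finite_ksubsets, symmetric])
    also have "card {I \<in> ksubsets n m. J \<subseteq> I} = (n - card J) choose (m - card J)"
      using J unfolding T_def by (intro card_ksubsets_supset) auto
    finally show "(\<Sum>I\<in>ksubsets n m. if J \<subseteq> I then h J else 0) = real ((n - card J) choose (m - card J)) * h J" .
  qed
  also have "\<dots> = (\<Sum>j\<le>m. \<Sum>J\<in>{J\<in>T. card J = j}. real ((n - card J) choose (m - card J)) * h J)"
    by (rule sum.group[symmetric]) (use fT in \<open>auto simp: T_def\<close>)
  also have "\<dots> = (\<Sum>j\<le>m. real ((n - j) choose (m - j)) * a ^ j * b ^ (m - j) * esym n j f)"
  proof (rule sum.cong[OF refl])
    fix j assume "j \<in> {..m}"
    then have "{J\<in>T. card J = j} = ksubsets n j" by (auto simp: T_def)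
    then show "(\<Sum>J\<in>{J\<in>T. card J = j}. real ((n - card J) choose (m - card J)) * h J) =
         real ((n - j) choose (m - j)) * a ^ j * b ^ (m - j) * esym n j f"
      by (simp add: esym_def h_def sum_distrib_left sum_distrib_right mult_ac)
  qed
  finally show ?thesis .
qed

lemma esym_0 [simp]: "esym n 0 f = 1"
proof -
  have "ksubsets n 0 = {{}}" by (auto dest: finite_subset)
  then show ?thesis unfolding esym_def by simp
qed

lemma esym_eq_0_if_gt:
  assumes "n < j"
  shows "esym n j f = 0"
proof -
  have no_subsets: "ksubsets n j = {}"
    using assms by (auto dest: card_mono[OF finite_lessThan])
  show ?thesis unfolding esym_def no_subsets by simp
qed

lemma esym_cong: "(\<And>i. i < n \<Longrightarrow> f i = g i) \<Longrightarrow> esym n j f = esym n j g"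
  unfolding esym_def by (intro sum.cong refl prod.cong) auto

lemma esym_pos:
  assumes "\<And>i. i < n \<Longrightarrow> f i > 0" "j \<le> n"
  shows "esym n j f > 0"
  unfolding esym_def
proof (rule sum_pos)
  show "finite (ksubsets n j)" by (rule finite_ksubsets)
  have "{..<j} \<in> ksubsets n j" using assms(2) by auto
  then show "ksubsets n j \<noteq> {}" by blast
  fix I assume "I \<in> ksubsets n j"
  then show "0 < prod f I" using assms(1) by (intro prod_pos) auto
qed

lemma continuous_on_esym: "continuous_on UNIV (esym n j)"
  unfolding esym_def[abs_def] by (intro continuous_intros) simp

lemma coeff_prod_linear_factors:
  fixes f :: "nat \<Rightarrow> real"
  assumes "k \<le> n"
  shows "coeff (\<Prod>i<n. [:f i, 1:]) k = esym n (n - k) f"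
proof -
  have "(\<Prod>i<n. [:f i, 1:]) = (\<Prod>i<n. [:f i:] + [:0, 1:])" by simp
  also have "\<dots> = (\<Sum>J\<in>Pow {..<n}. (\<Prod>i\<in>J. [:f i:]) * (\<Prod>i\<in>{..<n} - J. [:0, 1:]))"
    by (rule prod_add) simp
  also have "\<dots> = (\<Sum>J\<in>Pow {..<n}. monom (\<Prod>i\<in>J. f i) (n - card J))"
  proof (rule sum.cong[OF refl])
    fix J assume "J \<in> Pow {..<n}"
    then have "card ({..<n} - J) = n - card J"
      by (simp add: card_Diff_subset finite_subset)
    then show "(\<Prod>i\<in>J. [:f i:]) * (\<Prod>i\<in>{..<n} - J. [:0, 1:]) = monom (\<Prod>i\<in>J. f i) (n - card J)"
      by (simp add: prod_to_poly monom_altdef)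
  qed
  finally have "coeff (\<Prod>i<n. [:f i, 1:]) k =
      (\<Sum>J\<in>Pow {..<n}. if n - card J = k then (\<Prod>i\<in>J. f i) else 0)"
    by (simp add: coeff_sum)
  also have "\<dots> = (\<Sum>J\<in>{J \<in> Pow {..<n}. n - card J = k}. (\<Prod>i\<in>J. f i))"
    by (rule sum.inter_filter[symmetric]) simp
  also have "{J \<in> Pow {..<n}. n - card J = k} = ksubsets n (n - k)"
    using assms card_mono[OF finite_lessThan, of _ n] by auto
  finally show ?thesis by (simp add: esym_def)
qed

lemma esym_eq_if_mset_eq:
  fixes f g :: "nat \<Rightarrow> real"
  assumes "mset (map f [0..<n]) = mset (map g [0..<n])"
  shows "esym n j f = esym n j g"
proof (cases "j \<le> n")
  case True
  have prod_eq: "(\<Prod>i<n. [:h i, 1:]) = (\<Prod>x\<in>#mset (map h [0..<n]). [:x, 1:])" for h :: "nat \<Rightarrow> real"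
  proof -
    have "(\<Prod>i<n. [:h i, 1:]) = (\<Prod>i\<in>set [0..<n]. [:h i, 1:])"
      by (simp add: atLeast0LessThan)
    also have "\<dots> = prod_list (map (\<lambda>i. [:h i, 1:]) [0..<n])"
      by (rule prod.distinct_set_conv_list) simp
    finally show ?thesis
      by (simp add: prod_mset_prod_list[symmetric] multiset.map_comp o_def)
  qed
  have "esym n j f = coeff (\<Prod>i<n. [:f i, 1:]) (n - j)"
    using True by (simp add: coeff_prod_linear_factors)
  also have "\<dots> = coeff (\<Prod>i<n. [:g i, 1:]) (n - j)"
    by (simp only: prod_eq assms)
  also have "\<dots> = esym n j g"
    using True by (simp add: coeff_prod_linear_factors)
  finally show ?thesis .
qed (simp add: esym_eq_0_if_gt)

lemma esym_eq_if_same_multiplicities: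
  fixes f g :: "nat \<Rightarrow> real"
  assumes "\<And>c. card {i. i < n \<and> f i = c} = card {i. i < n \<and> g i = c}"
  shows "esym n j f = esym n j g"
proof (rule esym_eq_if_mset_eq, rule multiset_eqI)
  have "count (mset (map h [0..<n])) c = card {i. i < n \<and> h i = c}" for h :: "nat \<Rightarrow> real" and c
    unfolding count_mset count_list_eq_length_filter length_filter_conv_card
    by (auto intro!: arg_cong[where f=card])
  then show "count (mset (map f [0..<n])) c = count (mset (map g [0..<n])) c" for c
    using assms by simp
qed


section \<open>Real-rooted polynomials and Garding's inequalities\<close>

definition real_rooted :: "real poly \<Rightarrow> bool" where
  "real_rooted p \<longleftrightarrow> p \<noteq> 0 \<and> size (proots p) = degree p"

lemma Rolle_pderiv_roots:
  fixes p :: "real poly"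
  assumes "finite R" "R \<noteq> {}" "\<forall>x\<in>R. poly p x = 0"
  shows "\<exists>Z. finite Z \<and> Z \<inter> R = {} \<and> (\<forall>z\<in>Z. poly (pderiv p) z = 0 \<and> z < Max R) \<and>
             card R \<le> card Z + 1"
  using assms
proof (induction R rule: finite_linorder_max_induct)
  case empty
  then show ?case by simp
next
  case (insert b A)
  show ?case
  proof (cases "A = {}")
    case True
    then show ?thesis by (intro exI[of _ "{}"]) auto
  next
    case False
    from insert False obtain Z where Z: "finite Z" "Z \<inter> A = {}"
      "\<forall>z\<in>Z. poly (pderiv p) z = 0 \<and> z < Max A" "card A \<le> card Z + 1" by auto
    define a where "a = Max A"
    have aA: "a \<in> A" using False insert.hyps(1) by (simp add: a_def)
    have ab: "a < b" using insert.hyps aA by auto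
    have leA: "x \<le> a" if "x \<in> A" for x using that insert.hyps(1) by (simp add: a_def)
    have "poly p a = 0" "poly p b = 0" using insert.prems aA by auto
    moreover obtain \<xi> where "a < \<xi>" "\<xi> < b"
      and "poly p b - poly p a = (b - a) * poly (pderiv p) \<xi>"
      using poly_MVT[OF ab] by blast
    ultimately have \<xi>: "a < \<xi>" "\<xi> < b" "poly (pderiv p) \<xi> = 0" using ab by auto
    have Max_insert_b: "Max (insert b A) = b"
      using Max_insert[OF insert.hyps(1) False, of b] ab by (simp add: a_def max_absorb1)
    have \<xi>Z: "\<xi> \<notin> Z" using Z(3) \<xi>(1) a_def by fastforce
    have bA: "b \<notin> A" using insert.hyps(2) by auto
    have "insert \<xi> Z \<inter> insert b A = {}"
      using Z(2,3) \<xi> leA ab a_def by fastforce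
    moreover have "\<forall>z\<in>insert \<xi> Z. poly (pderiv p) z = 0 \<and> z < Max (insert b A)"
      using Z(3) \<xi> ab a_def Max_insert_b by auto
    moreover have "card (insert b A) \<le> card (insert \<xi> Z) + 1"
      using Z(1,4) \<xi>Z insert.hyps(1) bA by simp
    ultimately show ?thesis using Z(1) by (intro exI[of _ "insert \<xi> Z"]) auto
  qed
qed

lemma proots_pderiv_supset:
  fixes p :: "real poly"
  assumes p0: "p \<noteq> 0" and dp0: "pderiv p \<noteq> 0"
    and R: "R = {x. poly p x = 0}" and Z: "finite Z" "Z \<inter> R = {}" "\<forall>z\<in>Z. poly (pderiv p) z = 0"
  shows "(proots p - mset_set R) + mset_set Z \<subseteq># proots (pderiv p)"
proof (rule mset_subset_eqI)
  fix x
  have fR: "finite R" unfolding R using poly_roots_finite[OF p0] .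
  show "count (proots p - mset_set R + mset_set Z) x \<le> count (proots (pderiv p)) x"
  proof (cases "x \<in> R")
    case True
    then have "x \<notin> Z" using Z(2) by auto
    moreover have "order x p = Suc (order x (pderiv p))"
      using True p0 by (intro order_pderiv) (auto simp: R)
    ultimately show ?thesis using True fR Z(1) p0 dp0 by simp
  next
    case False
    then have "order x p = 0" using p0 order_root[of p x] by (simp add: R)
    moreover have "order x (pderiv p) \<noteq> 0" if "x \<in> Z"
      using that Z(3) dp0 order_root[of "pderiv p" x] by simp
    ultimately show ?thesis using False fR Z(1) p0 dp0 by (cases "x \<in> Z") simp_all
  qed
qed

text \<open>Rolle's theorem puts a root of the derivative strictly between consecutive distinct roots;
  the multiple roots of \<open>p\<close> supply the rest.\<close>
lemma real_rooted_pderiv: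
  fixes p :: "real poly"
  assumes "real_rooted p" "degree p \<ge> 1"
  shows "real_rooted (pderiv p)"
proof -
  define R where "R = {x. poly p x = 0}"
  have p0: "p \<noteq> 0" and sz: "size (proots p) = degree p"
    using assms(1) by (auto simp: real_rooted_def)
  have fR: "finite R" unfolding R_def using poly_roots_finite[OF p0] .
  have "proots p \<noteq> {#}" using sz assms(2) by auto
  then obtain r where "r \<in># proots p" by blast
  then have "r \<in> R" using p0 by (simp add: R_def)
  then have R_ne: "R \<noteq> {}" by blast
  have "\<forall>x\<in>R. poly p x = 0" by (simp add: R_def)
  from Rolle_pderiv_roots[OF fR R_ne this] obtain Z where Z: "finite Z" "Z \<inter> R = {}"
    "\<forall>z\<in>Z. poly (pderiv p) z = 0" "card R \<le> card Z + 1"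
    by blast
  have dp0: "pderiv p \<noteq> 0" using assms(2) pderiv_eq_0_iff[of p] by simp
  have sub: "mset_set R \<subseteq># proots p"
  proof (rule mset_subset_eqI)
    fix x show "count (mset_set R) x \<le> count (proots p) x"
      using fR p0 order_root[of p x] by (cases "x \<in> R") (auto simp: R_def)
  qed
  have "size (proots p - mset_set R + mset_set Z) \<le> size (proots (pderiv p))"
    by (rule size_mset_mono[OF proots_pderiv_supset[OF p0 dp0 R_def Z(1-3)]])
  moreover have "size (proots p - mset_set R + mset_set Z) = degree p - card R + card Z"
    using size_Diff_submset[OF sub] sz by simp
  moreover have "card R \<le> degree p"
    using size_mset_mono[OF sub] sz by simp
  moreover have "size (proots (pderiv p)) \<le> degree (pderiv p)" by (rule size_proots_le)
  ultimately show ?thesis using Z(4) dp0 by (simp add: real_rooted_def degree_pderiv)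
qed

lemma real_rooted_higher_pderiv:
  fixes p :: "real poly"
  assumes "real_rooted p" "k \<le> degree p"
  shows "real_rooted ((pderiv ^^ k) p) \<and> degree ((pderiv ^^ k) p) = degree p - k"
  using assms(2)
proof (induction k)
  case 0
  then show ?case using assms(1) by simp
next
  case (Suc k)
  then show ?case using real_rooted_pderiv by (simp add: degree_pderiv)
qed

lemma real_rooted_prod_linear_factors:
  "real_rooted (\<Prod>i<n. [:f i, 1:]) \<and> degree (\<Prod>i<n. [:f i, 1::real:]) = n"
proof (induction n)
  case 0
  then show ?case by (simp add: real_rooted_def)
next
  case (Suc n)
  define P where "P = (\<Prod>i<n. [:f i, 1::real:])"
  have P0: "P \<noteq> 0" using Suc by (simp add: real_rooted_def P_def)
  have "degree (P * [:f n, 1:]) = degree P + degree [:f n, 1:]"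
    by (rule degree_mult_eq) (use P0 in auto)
  then have "degree (P * [:f n, 1:]) = Suc n" using Suc by (simp add: P_def)
  moreover have "proots (P * [:f n, 1:]) = proots P + proots [:f n, 1:]"
    by (rule proots_mult) (use P0 in auto)
  then have "size (proots (P * [:f n, 1:])) = Suc n"
    using Suc by (simp add: real_rooted_def P_def)
  moreover have "P * [:f n, 1:] \<noteq> 0" using P0 by (simp del: mult_pCons_right mult_pCons_left)
  ultimately show ?case by (simp add: real_rooted_def P_def del: mult_pCons_right mult_pCons_left)
qed

lemma real_rooted_split_root:
  fixes q :: "real poly"
  assumes "real_rooted q" "degree q > 0"
  obtains a q1 where "q = [:-a, 1:] * q1" "poly q a = 0" "real_rooted q1" "degree q = Suc (degree q1)"
proof -
  have q0: "q \<noteq> 0" and sz: "size (proots q) = degree q"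
    using assms(1) by (auto simp: real_rooted_def)
  have "proots q \<noteq> {#}" using sz assms(2) by auto
  then obtain a where "a \<in># proots q" by blast
  then have pa: "poly q a = 0" using q0 by simp
  then obtain q1 where q1: "q = [:-a, 1:] * q1"
    by (auto simp: poly_eq_0_iff_dvd elim: dvdE)
  have q10: "q1 \<noteq> 0" using q0 q1 by auto
  have "degree ([:-a, 1:] * q1) = degree [:-a, 1::real:] + degree q1"
    by (rule degree_mult_eq) (use q10 in auto)
  then have dq: "degree q = Suc (degree q1)" using q1 by simp
  have "proots q = proots [:-a, 1:] + proots q1"
    unfolding q1 by (rule proots_mult) (use q10 in auto)
  also have "proots [:-a, 1:] = {#a#}" using proots_linear_factor[of "-a"] by simp
  finally have "real_rooted q1" using sz dq q10 by (simp add: real_rooted_def)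
  then show ?thesis using q1 pa dq that by blast
qed

lemma real_rooted_neg_roots_coeff_pos:
  fixes q :: "real poly"
  assumes "real_rooted q" "\<forall>x. poly q x = 0 \<longrightarrow> x < 0" "lead_coeff q > 0" "i \<le> degree q"
  shows "coeff q i > 0"
  using assms
proof (induction "degree q" arbitrary: q i)
  case 0
  then show ?case by simp
next
  case (Suc d)
  have "degree q > 0" using Suc.hyps(2) by simp
  then obtain a q1 where q1: "q = [:-a, 1:] * q1" and pa: "poly q a = 0" and rr1: "real_rooted q1"
    and dq: "degree q = Suc (degree q1)"
    by (rule real_rooted_split_root[OF Suc.prems(1)])
  have a0: "a < 0" using pa Suc.prems(2) by auto
  have roots1: "\<forall>x. poly q1 x = 0 \<longrightarrow> x < 0" using Suc.prems(2) q1 by auto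
  have "lead_coeff q = lead_coeff [:-a, 1:] * lead_coeff q1"
    unfolding q1 by (rule lead_coeff_mult)
  then have lc1: "lead_coeff q1 > 0" using Suc.prems(3) by simp
  have IH: "coeff q1 j > 0" if "j \<le> degree q1" for j
    using Suc.hyps(1)[OF _ rr1 roots1 lc1 that] Suc.hyps(2) dq by simp
  have nonneg: "coeff q1 j \<ge> 0" for j
    using IH[of j] coeff_eq_0[of q1 j] by (cases "j \<le> degree q1") auto
  have cq: "coeff q i = (-a) * coeff q1 i + (case i of 0 \<Rightarrow> 0 | Suc j \<Rightarrow> coeff q1 j)"
    using q1 by (simp add: coeff_pCons split: nat.split)
  show ?case
  proof (cases i)
    case 0
    then show ?thesis using cq IH[of 0] a0 by (simp add: mult_neg_pos)
  next
    case (Suc j)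
    then have "coeff q1 j > 0" using IH Suc.prems(4) dq by simp
    moreover have "(-a) * coeff q1 i \<ge> 0" using a0 nonneg[of i] by (simp add: mult_nonpos_nonneg)
    ultimately show ?thesis using cq Suc by simp
  qed
qed

text \<open>The \<open>(n - m)\<close>-th derivative \<open>q\<close> of \<open>\<Prod>i<n. (x + f i)\<close> is real-rooted by Rolle and has the
  coefficients \<open>esym n (m - i) f\<close> up to positive factors. Nonnegative coefficients with positive
  constant term leave only negative roots, and then all coefficients are positive.\<close>
lemma esym_pos_if_nonneg:
  fixes f :: "nat \<Rightarrow> real"
  assumes mn: "m \<le> n" and nonneg: "\<forall>j\<le>m. esym n j f \<ge> 0" and pos: "esym n m f > 0" and j: "j \<le> m"
  shows "esym n j f > 0"
proof -
  define p where "p = (\<Prod>i<n. [:f i, 1::real:])"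
  define q where "q = (pderiv ^^ (n - m)) p"
  have "real_rooted p" "degree p = n"
    using real_rooted_prod_linear_factors[of f n] by (auto simp: p_def)
  then have rrq: "real_rooted q" and dq: "degree q = m"
    using real_rooted_higher_pderiv[of p "n - m"] mn by (auto simp: q_def)
  have cq: "coeff q i = pochhammer (real (Suc i)) (n - m) * esym n (m - i) f" if "i \<le> m" for i
    using that mn by (simp add: q_def p_def coeff_higher_pderiv coeff_prod_linear_factors)
  have poch_pos: "pochhammer (real (Suc i)) k > 0" for i k
    by (rule pochhammer_pos) simp
  have cnn: "coeff q i \<ge> 0" for i
    using cq[of i] nonneg poch_pos[of i "n - m"] coeff_eq_0[of q i] dq
    by (cases "i \<le> m") auto
  have c0: "coeff q 0 > 0" using cq[of 0] pos poch_pos[of 0 "n - m"] by simp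
  have roots: "\<forall>x. poly q x = 0 \<longrightarrow> x < 0"
  proof (intro allI impI)
    fix x assume px: "poly q x = 0"
    show "x < 0"
    proof (rule ccontr)
      assume "\<not> x < 0"
      then have "coeff q 0 * x ^ 0 \<le> (\<Sum>i\<le>degree q. coeff q i * x ^ i)"
        by (intro member_le_sum) (use cnn in auto)
      then show False using c0 px by (simp add: poly_altdef)
    qed
  qed
  have "lead_coeff q > 0" using cq[of m] dq poch_pos by simp
  then have "coeff q (m - j) > 0" using real_rooted_neg_roots_coeff_pos[OF rrq roots] dq by simp
  then show ?thesis using cq[of "m - j"] j poch_pos[of "m - j" "n - m"] by (simp add: zero_less_mult_iff)
qed


section \<open>The Garding cone\<close>

lemma Hm_pos_iff: "m \<le> n \<Longrightarrow> Hm n m f > 0 \<longleftrightarrow> esym n m f > 0"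
  by (simp add: Hm_def zero_less_divide_iff)

lemma esym_pos_or_neg:
  assumes "m \<le> n" "esym n m f > 0"
  shows "(\<forall>j\<le>m. esym n j f > 0) \<or> (\<exists>j\<le>m. esym n j f < 0)"
  using esym_pos_if_nonneg[OF assms(1) _ assms(2)] by (meson not_le)

text \<open>On \<open>{H\<^sub>m > 0}\<close> the open sets \<open>{\<forall>j\<le>m. S\<^sub>j > 0}\<close> and \<open>{\<exists>j\<le>m. S\<^sub>j < 0}\<close> form a separation,
  and the positive cone lies in the first.\<close>
lemma Gamma_esym_pos:
  assumes lam: "lam \<in> Gamma n m" and mn: "m \<le> n" and j: "j \<le> m"
  shows "esym n j lam > 0"
proof -
  define U where "U = {lam \<in> Rn n. Hm n m lam > 0}"
  from lam obtain p where p: "p \<in> pos_cone n" and lam_C: "lam \<in> connected_component_set U p"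
    unfolding Gamma_def U_def by blast
  define C where "C = connected_component_set U p"
  define A where "A = (\<Inter>j\<in>{..m}. {x. 0 < esym n j x})"
  define B where "B = (\<Union>j\<in>{..m}. {x. esym n j x < 0})"
  have "open A" unfolding A_def
    by (intro open_INT ballI open_Collect_less continuous_on_const continuous_on_esym) auto
  moreover have "open B" unfolding B_def
    by (intro open_UN ballI open_Collect_less continuous_on_const continuous_on_esym)
  moreover have "A \<inter> B \<inter> C = {}"
    unfolding A_def B_def by force
  moreover have "C \<subseteq> A \<union> B"
  proof
    fix x assume "x \<in> C"
    then have "x \<in> U" using connected_component_subset unfolding C_def by blast
    then have "esym n m x > 0" using Hm_pos_iff[OF mn] by (auto simp: U_def)
    then show "x \<in> A \<union> B"
      using esym_pos_or_neg[OF mn] unfolding A_def B_def by blast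
  qed
  ultimately have "A \<inter> C = {} \<or> B \<inter> C = {}"
    using connectedD[of C] unfolding C_def by blast
  moreover have "p \<in> A \<inter> C"
  proof -
    have pos: "\<And>i. i < n \<Longrightarrow> p i > 0" using p by (auto simp: pos_cone_def)
    then have "p \<in> U" using p esym_pos[OF pos mn] Hm_pos_iff[OF mn]
      by (auto simp: U_def pos_cone_def)
    then show ?thesis using esym_pos[OF pos] mn by (auto simp: A_def C_def)
  qed
  ultimately have "B \<inter> C = {}" by blast
  then have "lam \<in> A" using \<open>C \<subseteq> A \<union> B\<close> lam_C unfolding C_def by blast
  then show ?thesis using j by (auto simp: A_def)
qed

lemma esym_affine_ge:
  assumes lam: "lam \<in> Gamma n m" and mn: "m \<le> n" and a: "a > 0" and b: "b \<ge> 0"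
  shows "a ^ m * esym n m lam \<le> esym n m (\<lambda>i. a * lam i + b)"
proof -
  have "real ((n - m) choose (m - m)) * a ^ m * b ^ (m - m) * esym n m lam \<le>
      (\<Sum>j\<le>m. real ((n - j) choose (m - j)) * a ^ j * b ^ (m - j) * esym n j lam)"
  proof (rule member_le_sum)
    fix k assume "k \<in> {..m} - {m}"
    then have "esym n k lam > 0" using Gamma_esym_pos[OF lam mn] by auto
    then show "0 \<le> real ((n - k) choose (m - k)) * a ^ k * b ^ (m - k) * esym n k lam"
      using a b by simp
  qed simp_all
  then show ?thesis by (simp add: esym_affine)
qed

text \<open>The segment from \<open>lam\<close> to \<open>a lam + b\<close> stays in \<open>{H\<^sub>m > 0}\<close>.\<close>
lemma Gamma_affine:
  assumes lam: "lam \<in> Gamma n m" and mn: "m \<le> n" and a: "a > 0" and b: "b \<ge> 0"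
  shows "(\<lambda>i. if i < n then a * lam i + b else 0) \<in> Gamma n m"
proof -
  define U where "U = {lam \<in> Rn n. Hm n m lam > 0}"
  from lam obtain p where p: "p \<in> pos_cone n" and lam_C: "lam \<in> connected_component_set U p"
    unfolding Gamma_def U_def by blast
  have lam_U: "lam \<in> U" using lam_C connected_component_subset by blast
  define x where "x t = (\<lambda>i. if i < n then (1 - t + t * a) * lam i + t * b else 0)" for t :: real
  define T where "T = x ` {0..1}"
  have "connected T" unfolding T_def
  proof (rule connected_continuous_image)
    show "continuous_on {0..1} x" unfolding x_def
    proof (rule continuous_on_coordinatewise_then_product)
      fix i show "continuous_on {0..1} (\<lambda>t. if i < n then (1 - t + t * a) * lam i + t * b else 0)"
        by (cases "i < n") (auto intro!: continuous_intros)
    qed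
  qed simp
  moreover have "T \<subseteq> U"
  proof
    fix y assume "y \<in> T"
    then obtain t where t: "0 \<le> t" "t \<le> 1" and y: "y = x t" by (auto simp: T_def)
    have c: "1 - t + t * a > 0"
    proof (cases "t = 0")
      case False
      then have "t * a > 0" using t a by simp
      then show ?thesis using t by simp
    qed simp
    have "esym n m y = esym n m (\<lambda>i. (1 - t + t * a) * lam i + t * b)"
      by (rule esym_cong) (simp add: y x_def)
    moreover have "(1 - t + t * a) ^ m * esym n m lam \<le> esym n m (\<lambda>i. (1 - t + t * a) * lam i + t * b)"
      using esym_affine_ge[OF lam mn c] t b by simp
    moreover have "(1 - t + t * a) ^ m * esym n m lam > 0"
      using c Gamma_esym_pos[OF lam mn, of m] by simp
    ultimately have "esym n m y > 0" by linarith
    then show "y \<in> U" using Hm_pos_iff[OF mn] by (simp add: U_def y x_def Rn_def)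
  qed
  moreover have "lam = x 0" using lam_U by (auto simp: x_def U_def Rn_def fun_eq_iff)
  then have "lam \<in> T" by (auto simp: T_def)
  ultimately have "T \<subseteq> connected_component_set U p"
    using connected_component_maximal connected_component_eq[OF lam_C] by metis
  moreover have "x 1 \<in> T" by (auto simp: T_def)
  moreover have "x 1 = (\<lambda>i. if i < n then a * lam i + b else 0)" by (simp add: x_def fun_eq_iff)
  ultimately show ?thesis using p unfolding Gamma_def U_def by auto
qed


section \<open>Generalized eigenvalues on a hyperplane\<close>

lemma hyperplane_subset_span:
  fixes u :: "real^'n" and b :: "nat \<Rightarrow> real^'n"
  assumes dim: "CARD('n) = Suc n" and u0: "u \<noteq> 0"
    and b_inj: "inj_on b {..<n}" and b_indep: "independent (b ` {..<n})"
    and b_orth: "\<forall>i<n. b i \<bullet> u = 0"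
  shows "{x. x \<bullet> u = 0} \<subseteq> span (b ` {..<n})"
proof -
  have "{x. u \<bullet> x = 0} \<subseteq> span (b ` {..<n})"
  proof (rule card_ge_dim_independent)
    show "b ` {..<n} \<subseteq> {x. u \<bullet> x = 0}" using b_orth by (auto simp: inner_commute)
    show "dim {x::real^'n. u \<bullet> x = 0} \<le> card (b ` {..<n})"
      using dim_hyperplane[OF u0] dim b_inj by (simp add: card_image)
  qed (rule b_indep)
  then show ?thesis by (simp add: inner_commute)
qed

lemma independent_sum_eq_0:
  fixes b :: "nat \<Rightarrow> 'a::real_vector"
  assumes b_inj: "inj_on b {..<n}" and b_indep: "independent (b ` {..<n})"
    and sum0: "(\<Sum>i<n. g i *\<^sub>R b i) = 0" and i: "i < n"
  shows "g i = 0"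
proof -
  define h where "h v = g (inv_into {..<n} b v)" for v
  have "(\<Sum>v\<in>b ` {..<n}. h v *\<^sub>R v) = 0"
    using sum0 unfolding h_def by (subst sum.reindex[OF b_inj]) (simp add: b_inj)
  then have "\<forall>v\<in>b ` {..<n}. h v = 0"
    using b_indep unfolding independent_explicit_finite_subsets by blast
  then show ?thesis using i b_inj by (auto simp: h_def)
qed

lemma generalized_eigenspace_eq_span:
  fixes u :: "real^'n" and S M :: "real^'n^'n" and b :: "nat \<Rightarrow> real^'n"
  assumes dim: "CARD('n) = Suc n" and u0: "u \<noteq> 0"
    and M_inj: "\<And>y. y \<bullet> u = 0 \<Longrightarrow> M *v y = 0 \<Longrightarrow> y = 0"
    and b_inj: "inj_on b {..<n}" and b_indep: "independent (b ` {..<n})"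
    and b_eig: "\<forall>i<n. b i \<bullet> u = 0 \<and> S *v b i = lam i *\<^sub>R (M *v b i)"
  shows "{x. x \<bullet> u = 0 \<and> S *v x = c *\<^sub>R (M *v x)} = span (b ` {i. i < n \<and> lam i = c})"
proof -
  define E where "E = {x. x \<bullet> u = 0 \<and> S *v x = c *\<^sub>R (M *v x)}"
  define J where "J = {i. i < n \<and> lam i = c}"
  define B where "B = b ` {..<n}"
  have fB: "finite B" by (simp add: B_def)
  have "subspace E"
    unfolding subspace_def E_def
    by (auto simp: inner_add_left matrix_vector_right_distrib matrix_vector_mult_scaleR scaleR_add_right)
  then have "span (b ` J) \<subseteq> E"
    by (rule span_minimal[rotated]) (use b_eig in \<open>auto simp: E_def J_def\<close>)
  moreover have "E \<subseteq> span (b ` J)"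
  proof
    fix x assume xE: "x \<in> E"
    then have "x \<in> span B"
      using hyperplane_subset_span[OF dim u0 b_inj b_indep] b_eig by (auto simp: E_def B_def)
    then obtain a where "x = (\<Sum>v\<in>B. a v *\<^sub>R v)" using span_finite[OF fB] by auto
    then have x_sum: "x = (\<Sum>i<n. a (b i) *\<^sub>R b i)"
      unfolding B_def by (subst (asm) sum.reindex[OF b_inj]) simp
    define y where "y = (\<Sum>i<n. (a (b i) * (lam i - c)) *\<^sub>R b i)"
    have "M *v y = (\<Sum>i<n. (a (b i) * (lam i - c)) *\<^sub>R (M *v b i))"
      unfolding y_def by (simp add: linear_sum[OF matrix_vector_mul_linear] matrix_vector_mult_scaleR)
    also have "\<dots> = (\<Sum>i<n. a (b i) *\<^sub>R (S *v b i)) - c *\<^sub>R (\<Sum>i<n. a (b i) *\<^sub>R (M *v b i))"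
      using b_eig by (simp add: scaleR_sum_right sum_subtractf[symmetric] algebra_simps)
    also have "\<dots> = S *v x - c *\<^sub>R (M *v x)"
      unfolding x_sum by (simp add: linear_sum[OF matrix_vector_mul_linear] matrix_vector_mult_scaleR)
    finally have "M *v y = 0" using xE by (simp add: E_def)
    moreover have "y \<bullet> u = 0" using b_eig by (simp add: y_def inner_sum_left)
    ultimately have "y = 0" using M_inj by blast
    then have coef: "a (b i) * (lam i - c) = 0" if "i < n" for i
      using independent_sum_eq_0[OF b_inj b_indep, of "\<lambda>i. a (b i) * (lam i - c)" i] that
      unfolding y_def by simp
    have "x = (\<Sum>i\<in>J. a (b i) *\<^sub>R b i)"
      unfolding x_sum J_def by (rule sum.mono_neutral_right) (use coef in auto)
    also have "\<dots> \<in> span (b ` J)"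
      by (intro span_sum span_scale span_base) auto
    finally show "x \<in> span (b ` J)" .
  qed
  ultimately show ?thesis by (simp add: E_def J_def)
qed

lemma dim_generalized_eigenspace:
  fixes u :: "real^'n" and S M :: "real^'n^'n" and b :: "nat \<Rightarrow> real^'n"
  assumes "CARD('n) = Suc n" "u \<noteq> 0"
    and "\<And>y. y \<bullet> u = 0 \<Longrightarrow> M *v y = 0 \<Longrightarrow> y = 0"
    and b_inj: "inj_on b {..<n}" and b_indep: "independent (b ` {..<n})"
    and "\<forall>i<n. b i \<bullet> u = 0 \<and> S *v b i = lam i *\<^sub>R (M *v b i)"
  shows "dim {x. x \<bullet> u = 0 \<and> S *v x = c *\<^sub>R (M *v x)} = card {i. i < n \<and> lam i = c}"
proof -
  have "independent (b ` {i. i < n \<and> lam i = c})"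
    by (rule independent_mono[OF b_indep]) auto
  moreover have "card (b ` {i. i < n \<and> lam i = c}) = card {i. i < n \<and> lam i = c}"
    by (rule card_image, rule inj_on_subset[OF b_inj]) auto
  ultimately show ?thesis
    using generalized_eigenspace_eq_span[OF assms, of c] by (simp add: dim_span dim_eq_card_independent)
qed

lemma esym_generalized_eigenvalues_unique:
  fixes u :: "real^'n" and S M :: "real^'n^'n" and b b' :: "nat \<Rightarrow> real^'n"
  assumes "CARD('n) = Suc n" "u \<noteq> 0"
    and "\<And>y. y \<bullet> u = 0 \<Longrightarrow> M *v y = 0 \<Longrightarrow> y = 0"
    and "inj_on b {..<n}" "independent (b ` {..<n})"
    and "\<forall>i<n. b i \<bullet> u = 0 \<and> S *v b i = lam i *\<^sub>R (M *v b i)"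
    and "inj_on b' {..<n}" "independent (b' ` {..<n})"
    and "\<forall>i<n. b' i \<bullet> u = 0 \<and> S *v b' i = lam' i *\<^sub>R (M *v b' i)"
  shows "esym n j lam = esym n j lam'"
proof (rule esym_eq_if_same_multiplicities)
  fix c
  show "card {i. i < n \<and> lam i = c} = card {i. i < n \<and> lam' i = c}"
    using dim_generalized_eigenspace[OF assms(1-6), of c]
      dim_generalized_eigenspace[OF assms(1-3,7-9), of c] by simp
qed


lemma hext_comp: "hext (\<lambda>y. G (z y)) = (\<lambda>y. G (hext z y))"
  by (simp add: hext_def fun_eq_iff)

lemma hext_sphere: "u \<in> sphere_n \<Longrightarrow> hext z u = z u"
  by (simp add: hext_def sphere_n_def)

lemma hext_in_image: "x \<noteq> 0 \<Longrightarrow> hext z x \<in> z ` sphere_n"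
  by (auto simp: hext_def sphere_n_def)

lemma egrad_hext_comp:
  fixes z :: "real^'n \<Rightarrow> real"
  assumes dz: "hext z differentiable (at x)"
    and dG: "(G has_real_derivative G') (at (hext z x))"
  shows "egrad (hext (\<lambda>y. G (z y))) x = G' *\<^sub>R egrad (hext z) x"
proof -
  define D where "D = frechet_derivative (hext z) (at x)"
  have hD: "(hext z has_derivative D) (at x)" using dz by (simp add: D_def frechet_derivative_works)
  have "((\<lambda>y. G (hext z y)) has_derivative (\<lambda>v. D v * G')) (at x)"
    by (rule DERIV_compose_FDERIV[OF dG hD])
  then have "frechet_derivative (hext (\<lambda>y. G (z y))) (at x) = (\<lambda>v. D v * G')"
    unfolding hext_comp by (rule frechet_derivative_at[symmetric])
  then show ?thesis by (simp add: egrad_def D_def vec_eq_iff)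
qed

lemma ehess_hext_comp:
  fixes z :: "real^'n \<Rightarrow> real"
  assumes x0: "x \<noteq> 0"
    and dz: "\<And>y. y \<noteq> 0 \<Longrightarrow> hext z differentiable (at y)"
    and dgrad: "\<And>i. (\<lambda>y. egrad (hext z) y $ i) differentiable (at x)"
    and dG: "\<And>y. y \<noteq> 0 \<Longrightarrow> (G has_real_derivative G' (hext z y)) (at (hext z y))"
    and dG': "(G' has_real_derivative G'') (at (hext z x))"
  shows "ehess (hext (\<lambda>y. G (z y))) x =
     G' (hext z x) *\<^sub>R ehess (hext z) x + G'' *\<^sub>R outer (egrad (hext z) x) (egrad (hext z) x)"
proof -
  define D where "D = frechet_derivative (hext z) (at x)"
  have hD: "(hext z has_derivative D) (at x)" using dz[OF x0] by (simp add: D_def frechet_derivative_works)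
  have egrad_D: "egrad (hext z) x $ j = D (axis j 1)" for j by (simp add: egrad_def D_def)
  have row: "frechet_derivative (\<lambda>y. egrad (hext (\<lambda>y. G (z y))) y $ i) (at x) =
      (\<lambda>v. G' (hext z x) * frechet_derivative (\<lambda>y. egrad (hext z) y $ i) (at x) v
          + D v * G'' * egrad (hext z) x $ i)" for i
  proof -
    define Di where "Di = frechet_derivative (\<lambda>y. egrad (hext z) y $ i) (at x)"
    have hDi: "((\<lambda>y. egrad (hext z) y $ i) has_derivative Di) (at x)"
      using dgrad by (simp add: Di_def frechet_derivative_works)
    have "((\<lambda>y. G' (hext z y)) has_derivative (\<lambda>v. D v * G'')) (at x)"
      by (rule DERIV_compose_FDERIV[OF dG' hD])
    from has_derivative_mult[OF this hDi]
    have "((\<lambda>y. G' (hext z y) * egrad (hext z) y $ i) has_derivative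
        (\<lambda>v. G' (hext z x) * Di v + D v * G'' * egrad (hext z) x $ i)) (at x)"
      by (simp add: algebra_simps)
    then have "((\<lambda>y. egrad (hext (\<lambda>y. G (z y))) y $ i) has_derivative
        (\<lambda>v. G' (hext z x) * Di v + D v * G'' * egrad (hext z) x $ i)) (at x)"
    proof (rule has_derivative_transform_within_open[where s="- {0}"])
      fix y :: "real^'n" assume "y \<in> - {0}"
      then show "G' (hext z y) * egrad (hext z) y $ i = egrad (hext (\<lambda>y. G (z y))) y $ i"
        using egrad_hext_comp[OF dz dG] by simp
    qed (use x0 in \<open>auto simp: open_Compl\<close>)
    then show ?thesis unfolding Di_def by (rule frechet_derivative_at[symmetric])
  qed
  show ?thesis
    by (simp add: ehess_def row vec_eq_iff outer_def egrad_D algebra_simps)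
qed

text \<open>The extension is constant along rays, so its gradient is tangent to the sphere.\<close>
lemma egrad_hext_orthogonal:
  fixes z :: "real^'n \<Rightarrow> real"
  assumes x0: "x \<noteq> 0" and dz: "hext z differentiable (at x)"
  shows "egrad (hext z) x \<bullet> x = 0"
proof -
  define D where "D = frechet_derivative (hext z) (at x)"
  have hD: "(hext z has_derivative D) (at x)" using dz by (simp add: D_def frechet_derivative_works)
  have "((\<lambda>t::real. (1 + t) *\<^sub>R x) has_derivative (\<lambda>t. t *\<^sub>R x)) (at 0)"
    by (auto intro!: derivative_eq_intros simp: algebra_simps)
  then have "((\<lambda>t::real. hext z ((1 + t) *\<^sub>R x)) has_derivative (\<lambda>t. D (t *\<^sub>R x))) (at 0)"
    using has_derivative_compose hD by fastforce
  moreover have "((\<lambda>t::real. hext z ((1 + t) *\<^sub>R x)) has_derivative (\<lambda>t. 0)) (at 0)"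
  proof (rule has_derivative_transform_within_open[where f="\<lambda>t. hext z x" and s="ball 0 1"])
    fix t :: real assume "t \<in> ball 0 1"
    then have t: "1 + t > 0" by (simp add: dist_real_def)
    then have "((1 + t) *\<^sub>R x) /\<^sub>R norm ((1 + t) *\<^sub>R x) = x /\<^sub>R norm x" by simp
    then show "hext z x = hext z ((1 + t) *\<^sub>R x)" by (simp only: hext_def)
  qed auto
  ultimately have "(\<lambda>t. D (t *\<^sub>R x)) = (\<lambda>t. 0)" by (rule has_derivative_unique)
  then have Dx: "D x = 0" by (metis scaleR_one)
  have lin: "linear D" using hD by (rule has_derivative_linear)
  have "egrad (hext z) x \<bullet> x = (\<Sum>i\<in>UNIV. D (axis i 1) * x $ i)"
    by (simp add: inner_vec_def egrad_def D_def)
  also have "\<dots> = D (\<Sum>i\<in>UNIV. x $ i *\<^sub>R axis i 1)"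
    by (simp add: linear_sum[OF lin] linear_scale[OF lin] mult.commute)
  also have "(\<Sum>i\<in>UNIV. x $ i *\<^sub>R axis i 1) = x"
    using basis_expansion[of x] by (simp add: scalar_mult_eq_scaleR)
  finally show ?thesis using Dx by simp
qed

lemma outer_mult_vector: "outer a c *v y = (c \<bullet> y) *\<^sub>R (a::real^'n)"
  by (simp add: outer_def matrix_vector_mult_def inner_vec_def vec_eq_iff sum_distrib_left mult_ac)

lemma tproj_mult_vector: "tproj u *v y = y - (u \<bullet> y) *\<^sub>R (u::real^'n)"
  by (simp add: tproj_def matrix_vector_mult_diff_rdistrib outer_mult_vector)

lemma tproj_mult_tangent: "y \<bullet> u = 0 \<Longrightarrow> tproj u *v y = y"
  by (simp add: tproj_mult_vector inner_commute)

lemma shess_mult_vector: "shess w u *v y = tproj u *v (ehess (hext w) u *v (tproj u *v y))"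
  by (simp add: shess_def matrix_vector_mul_assoc matrix_mul_assoc)


lemma space_form_hyperbolic: "tK (-1) = tanh" "tK_inv (-1) = artanh" "phi (-1) = sinh" "dphi (-1) = cosh"
  and space_form_spherical: "tK 1 = tan" "tK_inv 1 = arctan" "phi 1 = sin" "dphi 1 = cos"
  by (auto simp: fun_eq_iff tK_def tK_inv_def phi_def dphi_def)

lemma tanh_artanh:
  fixes w :: real
  assumes "\<bar>w\<bar> < 1"
  shows "tanh (artanh w) = w"
proof -
  have w: "1 + w > 0" "1 - w > 0" using assms by (auto simp: abs_less_iff)
  define E where "E = exp (- 2 * artanh w)"
  have "E = inverse ((1 + w) / (1 - w))"
    using w by (simp add: E_def artanh_def exp_minus)
  then have E: "E = (1 - w) / (1 + w)" by simp
  have "tanh (artanh w) = (1 - E) / (1 + E)" by (simp add: tanh_real_altdef E_def)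
  also have "\<dots> = w" using w by (simp add: E field_simps)
  finally show ?thesis .
qed

lemma tanh_half_angle:
  fixes a :: real
  shows "1 - (tanh a)\<^sup>2 > 0"
    and "sinh (2 * a) = 2 * tanh a / (1 - (tanh a)\<^sup>2)"
    and "cosh (2 * a) = (1 + (tanh a)\<^sup>2) / (1 - (tanh a)\<^sup>2)"
proof -
  have c0: "cosh a \<noteq> 0" by simp
  have "(sinh a)\<^sup>2 = (cosh a)\<^sup>2 - 1" using cosh_square_eq[of a] by simp
  then have sech: "1 - (tanh a)\<^sup>2 = 1 / (cosh a)\<^sup>2"
    using c0 by (simp add: tanh_def power_divide field_simps)
  then show "1 - (tanh a)\<^sup>2 > 0" by simp
  show "sinh (2 * a) = 2 * tanh a / (1 - (tanh a)\<^sup>2)"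
    unfolding sech using c0 by (simp add: sinh_double tanh_def power2_eq_square)
  show "cosh (2 * a) = (1 + (tanh a)\<^sup>2) / (1 - (tanh a)\<^sup>2)"
    unfolding sech using c0 cosh_double[of a] by (simp add: tanh_def power_divide field_simps)
qed

lemma tK_half_angle:
  assumes K: "K = -1 \<or> K = 1" and a: "K = 1 \<longrightarrow> \<bar>a\<bar> < pi/2"
  shows "1 + K * (tK K a)\<^sup>2 > 0"
    and "phi K (2 * a) = 2 * tK K a / (1 + K * (tK K a)\<^sup>2)"
    and "dphi K (2 * a) = (1 - K * (tK K a)\<^sup>2) / (1 + K * (tK K a)\<^sup>2)"
proof -
  have "1 + K * (tK K a)\<^sup>2 > 0 \<and> phi K (2 * a) = 2 * tK K a / (1 + K * (tK K a)\<^sup>2) \<and>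
        dphi K (2 * a) = (1 - K * (tK K a)\<^sup>2) / (1 + K * (tK K a)\<^sup>2)"
    using K
  proof
    assume "K = -1"
    then show ?thesis using tanh_half_angle[of a] by (simp add: space_form_hyperbolic)
  next
    assume K1: "K = 1"
    then have "cos a > 0" using a by (intro cos_gt_zero_pi) (auto simp: abs_less_iff)
    moreover have "1 + (tan a)\<^sup>2 > 0" by (simp add: add_pos_nonneg)
    ultimately show ?thesis
      using K1 by (simp add: space_form_spherical sin_tan_half cos_tan_half)
  qed
  then show "1 + K * (tK K a)\<^sup>2 > 0"
    and "phi K (2 * a) = 2 * tK K a / (1 + K * (tK K a)\<^sup>2)"
    and "dphi K (2 * a) = (1 - K * (tK K a)\<^sup>2) / (1 + K * (tK K a)\<^sup>2)" by auto
qed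

lemma tK_tK_inv:
  assumes "K = -1 \<or> K = 1" and "K = -1 \<longrightarrow> \<bar>w\<bar> < 1"
  shows "tK K (tK_inv K w) = w"
  using assms by (auto simp: space_form_hyperbolic space_form_spherical tanh_artanh tan_arctan)

lemma tK_inv_bounded: "K = 1 \<longrightarrow> \<bar>tK_inv K w\<bar> < pi/2"
  using arctan_bounded[of w] by (auto simp: space_form_spherical abs_less_iff)

lemma tK_half_pos:
  assumes "K = -1 \<or> K = 1" and "0 < r" and "K = 1 \<longrightarrow> r < pi"
  shows "tK K (r / 2) > 0"
  using assms by (auto simp: space_form_hyperbolic space_form_spherical intro!: tan_gt_zero)

lemma tK_deriv:
  assumes K: "K = -1 \<or> K = 1" and a: "K = 1 \<longrightarrow> \<bar>a\<bar> < pi/2"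
  shows "(tK K has_real_derivative 1 + K * (tK K a)\<^sup>2) (at a)"
  using K
proof
  assume "K = -1"
  then show ?thesis by (auto simp: space_form_hyperbolic intro!: derivative_eq_intros)
next
  assume K1: "K = 1"
  then have "cos a > 0" using a by (intro cos_gt_zero_pi) (auto simp: abs_less_iff)
  then have c0: "cos a \<noteq> 0" by simp
  then have "inverse ((cos a)\<^sup>2) = 1 + (tan a)\<^sup>2"
    by (simp add: tan_def field_simps sin_cos_squared_add3 power2_eq_square)
  then show ?thesis using K1 DERIV_tan[OF c0] by (simp add: space_form_spherical)
qed

lemma tK_inv_deriv:
  assumes "K = -1 \<or> K = 1" and "K = -1 \<longrightarrow> \<bar>w\<bar> < 1"
  shows "(tK_inv K has_real_derivative 1 / (1 + K * w\<^sup>2)) (at w)"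
  using assms artanh_real_has_field_derivative[of w UNIV] DERIV_arctan[of w]
  by (auto simp: space_form_hyperbolic space_form_spherical divide_inverse)

lemma phi_deriv: "(phi K has_real_derivative dphi K r) (at r)"
  unfolding phi_def[abs_def] dphi_def by (cases "K = -1") (auto intro!: derivative_eq_intros)

text \<open>In the coordinate \<open>w = t(\<rho>/2)\<close>, scaling \<open>w\<close> by \<open>s\<close> moves \<open>\<rho>\<close> to \<open>rescale K s \<rho>\<close>.\<close>
definition rescale :: "real \<Rightarrow> real \<Rightarrow> real \<Rightarrow> real" where
  "rescale K s r = 2 * tK_inv K (s * tK K (r / 2))"

lemma phi_rescale:
  assumes K: "K = -1 \<or> K = 1" and w: "K = -1 \<longrightarrow> \<bar>s * tK K (r / 2)\<bar> < 1"
  shows "1 + K * (s * tK K (r / 2))\<^sup>2 > 0"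
    and "phi K (rescale K s r) = 2 * (s * tK K (r / 2)) / (1 + K * (s * tK K (r / 2))\<^sup>2)"
    and "dphi K (rescale K s r) = (1 - K * (s * tK K (r / 2))\<^sup>2) / (1 + K * (s * tK K (r / 2))\<^sup>2)"
  using tK_half_angle[OF K tK_inv_bounded, of "s * tK K (r / 2)"] tK_tK_inv[OF K w]
  by (simp_all add: rescale_def)

lemma rescale_ode:
  assumes K: "K = -1 \<or> K = 1" and r: "0 < r" "K = 1 \<longrightarrow> r < pi"
    and s: "s > 0" and w: "K = -1 \<longrightarrow> s * tK K (r / 2) < 1"
  shows "phi K r > 0" and "phi K (rescale K s r) > 0"
    and "(rescale K s has_real_derivative phi K (rescale K s r) / phi K r) (at r)"
proof -
  define t where "t = tK K (r / 2)"
  have t: "t > 0" using tK_half_pos[OF K r] by (simp add: t_def)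
  have half: "K = 1 \<longrightarrow> \<bar>r / 2\<bar> < pi / 2" using r by auto
  have w': "K = -1 \<longrightarrow> \<bar>s * t\<bar> < 1" using w s t by (auto simp: t_def)
  note phi_r = tK_half_angle[OF K half, folded t_def]
  note phi_R = phi_rescale[OF K w'[unfolded t_def], folded t_def]
  show "phi K r > 0" using phi_r t by simp
  show "phi K (rescale K s r) > 0" using phi_R t s by simp
  have "((\<lambda>r. r / 2) has_real_derivative 1 / 2) (at r)"
    by (auto intro!: derivative_eq_intros)
  from DERIV_chain2[OF tK_deriv[OF K half] this]
  have "((\<lambda>r. s * tK K (r / 2)) has_real_derivative s * ((1 + K * t\<^sup>2) * (1 / 2))) (at r)"
    unfolding t_def by (rule DERIV_cmult)
  from DERIV_cmult[OF DERIV_chain2[OF tK_inv_deriv[OF K w'[unfolded t_def]] this], of 2]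
  have "(rescale K s has_real_derivative
      2 * (1 / (1 + K * (s * t)\<^sup>2) * (s * ((1 + K * t\<^sup>2) * (1 / 2))))) (at r)"
    unfolding rescale_def[abs_def] t_def .
  moreover have "2 * (1 / (1 + K * (s * t)\<^sup>2) * (s * ((1 + K * t\<^sup>2) * (1 / 2)))) =
      phi K (rescale K s r) / phi K r"
  proof -
    have phi_r': "phi K r = 2 * t / (1 + K * t\<^sup>2)" using phi_r(2) by simp
    have frac: "2 * (1 / D' * (s * (D * (1 / 2)))) = (2 * (s * t) / D') / (2 * t / D)"
      if "D \<noteq> 0" "D' \<noteq> 0" for D D'
      using that t by (simp add: field_simps)
    show ?thesis
      unfolding phi_r' phi_R(2) by (rule frac) (use phi_r(1) phi_R(1) in auto)
  qed
  ultimately show "(rescale K s has_real_derivative phi K (rescale K s r) / phi K r) (at r)"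
    by simp
qed


section \<open>Principal curvatures of radial graphs\<close>

lemma sgrad_comp:
  fixes z :: "real^'n \<Rightarrow> real"
  assumes "C2_sphere z" and u: "u \<in> sphere_n" and "(G has_real_derivative G') (at (z u))"
  shows "sgrad (\<lambda>x. G (z x)) u = G' *\<^sub>R sgrad z u"
proof -
  have "u \<noteq> 0" using u by (auto simp: sphere_n_def)
  then have "hext z differentiable (at u)" using assms(1) by (simp add: C2_sphere_def)
  from egrad_hext_comp[OF this] show ?thesis
    using assms(3) by (simp add: sgrad_def hext_sphere[OF u])
qed

lemma shess_comp:
  fixes z :: "real^'n \<Rightarrow> real" and u y :: "real^'n"
  assumes C2: "C2_sphere z" and u: "u \<in> sphere_n" and yu: "y \<bullet> u = 0"
    and dG: "\<And>x. x \<in> sphere_n \<Longrightarrow> (G has_real_derivative G' (z x)) (at (z x))"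
    and dG': "(G' has_real_derivative G'') (at (z u))"
  shows "shess (\<lambda>x. G (z x)) u *v y =
           G' (z u) *\<^sub>R (shess z u *v y) + (G'' * (sgrad z u \<bullet> y)) *\<^sub>R sgrad z u"
proof -
  have u0: "u \<noteq> 0" using u by (auto simp: sphere_n_def)
  have dz: "hext z differentiable (at x)" if "x \<noteq> 0" for x
    using C2 that by (simp add: C2_sphere_def)
  have dgrad: "(\<lambda>x. egrad (hext z) x $ i) differentiable (at u)" for i
    using C2 u0 by (simp add: C2_sphere_def)
  have dG_hext: "(G has_real_derivative G' (hext z x)) (at (hext z x))" if "x \<noteq> 0" for x
    using hext_in_image[OF that, of z] dG by auto
  have "sgrad z u \<bullet> u = 0"
    unfolding sgrad_def by (rule egrad_hext_orthogonal[OF u0 dz[OF u0]])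
  then have "tproj u *v sgrad z u = sgrad z u" by (rule tproj_mult_tangent)
  moreover have "ehess (hext (\<lambda>x. G (z x))) u =
      G' (z u) *\<^sub>R ehess (hext z) u + G'' *\<^sub>R outer (sgrad z u) (sgrad z u)"
    using ehess_hext_comp[OF u0 dz dgrad dG_hext] dG' by (simp add: sgrad_def hext_sphere[OF u])
  ultimately show ?thesis
    by (simp add: shess_mult_vector tproj_mult_tangent[OF yu] matrix_vector_mult_add_rdistrib
        scaleR_matrix_vector_assoc[symmetric] outer_mult_vector matrix_vector_right_distrib
        matrix_vector_mult_scaleR)
qed

lemma metric_mat_mult_tangent:
  fixes u y :: "real^'n"
  assumes "y \<bullet> u = 0"
  shows "metric_mat K w u *v y = (phi K (w u))\<^sup>2 *\<^sub>R y + (sgrad w u \<bullet> y) *\<^sub>R sgrad w u"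
  by (simp add: metric_mat_def matrix_vector_mult_add_rdistrib scaleR_matrix_vector_assoc[symmetric]
      tproj_mult_tangent[OF assms] outer_mult_vector)

lemma sff_mat_mult_tangent:
  fixes u y :: "real^'n"
  assumes "y \<bullet> u = 0"
  shows "sff_mat K w u *v y = (1 / sqrt (1 + (sgrad w u \<bullet> sgrad w u) / (phi K (w u))\<^sup>2)) *\<^sub>R
          ((phi K (w u) * dphi K (w u)) *\<^sub>R y - shess w u *v y
            + ((2 * dphi K (w u) / phi K (w u)) * (sgrad w u \<bullet> y)) *\<^sub>R sgrad w u)"
  by (simp add: sff_mat_def Let_def matrix_vector_mult_add_rdistrib matrix_vector_mult_diff_rdistrib
      scaleR_matrix_vector_assoc[symmetric] tproj_mult_tangent[OF assms] outer_mult_vector)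

lemma metric_mat_injective:
  fixes u y :: "real^'n"
  assumes p: "phi K (w u) \<noteq> 0" and yu: "y \<bullet> u = 0" and My: "metric_mat K w u *v y = 0"
  shows "y = 0"
proof -
  have "0 = y \<bullet> (metric_mat K w u *v y)" using My by simp
  also have "\<dots> = (phi K (w u))\<^sup>2 * (y \<bullet> y) + (sgrad w u \<bullet> y)\<^sup>2"
    by (simp add: metric_mat_mult_tangent[OF yu] inner_add_right power2_eq_square inner_commute)
  finally have "(phi K (w u))\<^sup>2 * (y \<bullet> y) = 0"
    by (smt (verit) zero_le_power2 inner_ge_zero mult_nonneg_nonneg)
  then show ?thesis using p by simp
qed

text \<open>\<open>curvS\<close> picks an arbitrary element of \<open>pcurv\<close>; all elements give the same \<open>esym\<close>.\<close>
lemma curvS_eq_esym: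
  fixes u :: "real^'n"
  assumes dim: "CARD('n) = Suc n" and u: "u \<in> sphere_n" and p: "phi K (w u) \<noteq> 0"
    and lam: "lam \<in> pcurv K n w u"
  shows "curvS K n j w u = esym n j lam"
proof -
  define lam' where "lam' = (SOME l. l \<in> pcurv K n w u)"
  have "lam' \<in> pcurv K n w u"
    unfolding lam'_def using lam by (rule someI[of "\<lambda>l. l \<in> pcurv K n w u"])
  then obtain b' where b': "inj_on b' {..<n}" "independent (b' ` {..<n})"
    "\<forall>i<n. b' i \<bullet> u = 0 \<and> sff_mat K w u *v b' i = lam' i *\<^sub>R (metric_mat K w u *v b' i)"
    unfolding pcurv_def by blast
  from lam obtain b where b: "inj_on b {..<n}" "independent (b ` {..<n})"
    "\<forall>i<n. b i \<bullet> u = 0 \<and> sff_mat K w u *v b i = lam i *\<^sub>R (metric_mat K w u *v b i)"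
    unfolding pcurv_def by blast
  have "u \<noteq> 0" using u by (auto simp: sphere_n_def)
  then have "esym n j lam' = esym n j lam"
    using esym_generalized_eigenvalues_unique[OF dim _ _ b' b] metric_mat_injective[where K=K and w=w and u=u, OF p]
    by blast
  then show ?thesis by (simp add: curvS_def lam'_def)
qed

text \<open>The pointwise algebra behind \<open>sff_eigenvector_comp\<close>: \<open>Hy\<close> is the Hessian term, and the
  eigenvalue equation at radius \<open>\<rho>\<close> (with \<open>p = phi \<rho>\<close>, \<open>dp = dphi \<rho>\<close>) becomes the one at \<open>G \<rho>\<close>.\<close>
lemma sff_eigen_rescale:
  fixes y g Hy :: "real^'n"
  assumes eq: "(1/W) *\<^sub>R ((p*dp) *\<^sub>R y - Hy + (2*dp/p*gy) *\<^sub>R g) = lam *\<^sub>R (p^2 *\<^sub>R y + gy *\<^sub>R g)"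
    and W: "W > 0" and p: "p \<noteq> 0" and P: "P \<noteq> 0" and q: "q = P/p" and q2: "q2 = P*(dP - dp)/p^2"
  shows "(1/W) *\<^sub>R ((P*dP) *\<^sub>R y - (q *\<^sub>R Hy + (q2*gy) *\<^sub>R g) + (2*dP/P*(q*gy)) *\<^sub>R (q *\<^sub>R g)) =
     ((p/P)*lam + (dP-dp)/(P*W)) *\<^sub>R (P^2 *\<^sub>R y + (q*gy) *\<^sub>R (q *\<^sub>R g))"
  unfolding vec_eq_iff
proof
  fix k
  have "((1/W) *\<^sub>R ((p*dp) *\<^sub>R y - Hy + (2*dp/p*gy) *\<^sub>R g)) $ k = (lam *\<^sub>R (p^2 *\<^sub>R y + gy *\<^sub>R g)) $ k"
    using eq by simp
  then have "(1/W) * ((p*dp) * y$k - Hy$k + (2*dp/p*gy) * g$k) = lam * (p^2 * y$k + gy * g$k)"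
    by simp
  then have "(p*dp) * y$k - Hy$k + (2*dp/p*gy) * g$k = W * (lam * (p^2 * y$k + gy * g$k))"
    using W by (simp add: field_simps)
  then have Hk: "Hy$k = (p*dp) * y$k + (2*dp/p*gy) * g$k - W * (lam * (p^2 * y$k + gy * g$k))"
    by linarith
  show "((1/W) *\<^sub>R ((P*dP) *\<^sub>R y - (q *\<^sub>R Hy + (q2*gy) *\<^sub>R g) + (2*dP/P*(q*gy)) *\<^sub>R (q *\<^sub>R g))) $ k =
     (((p/P)*lam + (dP-dp)/(P*W)) *\<^sub>R (P^2 *\<^sub>R y + (q*gy) *\<^sub>R (q *\<^sub>R g))) $ k"
    using W p P by (simp add: Hk q q2 field_simps power2_eq_square)
qed

lemma conformal_factor_deriv:
  assumes dG: "(G has_real_derivative phi K (G r) / phi K r) (at r)" and p: "phi K r \<noteq> 0"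
  shows "((\<lambda>\<rho>. phi K (G \<rho>) / phi K \<rho>) has_real_derivative
            phi K (G r) * (dphi K (G r) - dphi K r) / (phi K r)\<^sup>2) (at r)"
proof -
  have "((\<lambda>\<rho>. phi K (G \<rho>) / phi K \<rho>) has_real_derivative
      (dphi K (G r) * (phi K (G r) / phi K r) * phi K r - phi K (G r) * dphi K r) / (phi K r * phi K r)) (at r)"
    using DERIV_divide[OF DERIV_chain2[OF phi_deriv[of K] dG] phi_deriv[of K]] p by simp
  moreover have "(dphi K (G r) * (phi K (G r) / phi K r) * phi K r - phi K (G r) * dphi K r) /
      (phi K r * phi K r) = phi K (G r) * (dphi K (G r) - dphi K r) / (phi K r)\<^sup>2"
    using p by (simp add: field_simps power2_eq_square)
  ultimately show ?thesis by simp
qed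

text \<open>A reparametrization \<open>\<rho> \<mapsto> G \<rho>\<close> of the radial coordinate with \<open>G' = phi(G)/phi\<close> is conformal on
  the spheres \<open>\<rho> = const\<close>, so it maps principal curvatures affinely.\<close>
lemma sff_eigenvector_comp:
  fixes z :: "real^'n \<Rightarrow> real" and u y :: "real^'n"
  assumes C2: "C2_sphere z" and u: "u \<in> sphere_n"
    and ode: "\<And>x. x \<in> sphere_n \<Longrightarrow>
                phi K (z x) \<noteq> 0 \<and> (G has_real_derivative phi K (G (z x)) / phi K (z x)) (at (z x))"
    and PG: "phi K (G (z u)) \<noteq> 0"
    and yu: "y \<bullet> u = 0" and eig: "sff_mat K z u *v y = l *\<^sub>R (metric_mat K z u *v y)"
  shows "sff_mat K (\<lambda>x. G (z x)) u *v y =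
           (phi K (z u) / phi K (G (z u)) * l + (dphi K (G (z u)) - dphi K (z u)) /
              (phi K (G (z u)) * sqrt (1 + (sgrad z u \<bullet> sgrad z u) / (phi K (z u))\<^sup>2)))
           *\<^sub>R (metric_mat K (\<lambda>x. G (z x)) u *v y)"
proof -
  define p P dp dP where "p = phi K (z u)" and "P = phi K (G (z u))"
    and "dp = dphi K (z u)" and "dP = dphi K (G (z u))"
  define g W where "g = sgrad z u" and "W = sqrt (1 + (g \<bullet> g) / p\<^sup>2)"
  define q q2 where "q = P / p" and "q2 = P * (dP - dp) / p\<^sup>2"
  have p: "p \<noteq> 0" and dG: "(G has_real_derivative q) (at (z u))"
    using ode[OF u] by (simp_all add: p_def q_def P_def)
  have W: "W > 0" by (simp add: W_def add_pos_nonneg)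
  have dG': "((\<lambda>\<rho>. phi K (G \<rho>) / phi K \<rho>) has_real_derivative q2) (at (z u))"
    using conformal_factor_deriv[OF dG[unfolded q_def p_def P_def] p[unfolded p_def]]
    by (simp add: q2_def p_def P_def dP_def dp_def)
  have dG_sphere: "(G has_real_derivative (\<lambda>\<rho>. phi K (G \<rho>) / phi K \<rho>) (z x)) (at (z x))"
    if "x \<in> sphere_n" for x
    using ode[OF that] by simp
  have sgrad_G: "sgrad (\<lambda>x. G (z x)) u = q *\<^sub>R g"
    using sgrad_comp[OF C2 u dG] by (simp add: g_def)
  have W_G: "sqrt (1 + (sgrad (\<lambda>x. G (z x)) u \<bullet> sgrad (\<lambda>x. G (z x)) u) / (phi K (G (z u)))\<^sup>2) = W"
    using p PG by (simp add: sgrad_G W_def q_def P_def power2_eq_square field_simps)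
  have shess_G: "shess (\<lambda>x. G (z x)) u *v y = q *\<^sub>R (shess z u *v y) + (q2 * (g \<bullet> y)) *\<^sub>R g"
    using shess_comp[OF C2 u yu dG_sphere dG'] by (simp add: g_def q_def p_def P_def)
  have "(1/W) *\<^sub>R ((p*dp) *\<^sub>R y - shess z u *v y + (2*dp/p*(g \<bullet> y)) *\<^sub>R g) =
      l *\<^sub>R (p^2 *\<^sub>R y + (g \<bullet> y) *\<^sub>R g)"
    using eig sff_mat_mult_tangent[OF yu, of K z] metric_mat_mult_tangent[OF yu, of K z]
    by (simp add: W_def p_def dp_def g_def)
  from sff_eigen_rescale[OF this W p PG[folded P_def] q_def q2_def]
  show ?thesis
    using sff_mat_mult_tangent[OF yu, of K "\<lambda>x. G (z x)", unfolded W_G]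
      metric_mat_mult_tangent[OF yu, of K "\<lambda>x. G (z x)"]
    unfolding shess_G sgrad_G P_def[symmetric] dP_def[symmetric] inner_scaleR_left
    by (simp add: p_def dp_def g_def W_def)
qed

lemma pcurv_comp:
  fixes z :: "real^'n \<Rightarrow> real" and u :: "real^'n"
  assumes C2: "C2_sphere z" and u: "u \<in> sphere_n"
    and ode: "\<And>x. x \<in> sphere_n \<Longrightarrow>
                phi K (z x) \<noteq> 0 \<and> (G has_real_derivative phi K (G (z x)) / phi K (z x)) (at (z x))"
    and PG: "phi K (G (z u)) \<noteq> 0" and lam: "lam \<in> pcurv K n z u"
  shows "(\<lambda>i. if i < n then phi K (z u) / phi K (G (z u)) * lam i
                + (dphi K (G (z u)) - dphi K (z u)) /
                  (phi K (G (z u)) * sqrt (1 + (sgrad z u \<bullet> sgrad z u) / (phi K (z u))\<^sup>2))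
              else 0) \<in> pcurv K n (\<lambda>x. G (z x)) u"
proof -
  from lam obtain b where b: "inj_on b {..<n}" "independent (b ` {..<n})"
    "\<forall>i<n. b i \<bullet> u = 0 \<and> sff_mat K z u *v b i = lam i *\<^sub>R (metric_mat K z u *v b i)"
    unfolding pcurv_def by blast
  then show ?thesis
    using sff_eigenvector_comp[OF C2 u ode PG] unfolding pcurv_def by auto
qed


lemma zof_scale: "zof K (\<lambda>x. s * tK K (z x / 2)) = (\<lambda>x. rescale K s (z x))"
  by (simp add: zof_def rescale_def fun_eq_iff)

lemma Wv_half_tan:
  fixes z :: "real^'n \<Rightarrow> real"
  assumes K: "K = -1 \<or> K = 1" and C2: "C2_sphere z" and u: "u \<in> sphere_n"
    and z: "0 < z u" "K = 1 \<longrightarrow> z u < pi"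
  shows "Wv (\<lambda>x. tK K (z x / 2)) u =
           tK K (z u / 2) * sqrt (1 + (sgrad z u \<bullet> sgrad z u) / (phi K (z u))\<^sup>2)"
proof -
  define t g where "t = tK K (z u / 2)" and "g = sgrad z u"
  have half: "K = 1 \<longrightarrow> \<bar>z u / 2\<bar> < pi / 2" using z by auto
  have t: "t > 0" using tK_half_pos[OF K z] by (simp add: t_def)
  note phi_z = tK_half_angle[OF K half, folded t_def]
  have "((\<lambda>r. r / 2) has_real_derivative 1 / 2) (at (z u))"
    by (auto intro!: derivative_eq_intros)
  from DERIV_chain2[OF tK_deriv[OF K half] this]
  have "sgrad (\<lambda>x. tK K (z x / 2)) u = ((1 + K * t\<^sup>2) * (1 / 2)) *\<^sub>R g"
    using sgrad_comp[OF C2 u] by (simp add: t_def g_def)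
  then have norm_sq: "(norm (sgrad (\<lambda>x. tK K (z x / 2)) u))\<^sup>2 = ((1 + K * t\<^sup>2) / 2)\<^sup>2 * (g \<bullet> g)"
    unfolding power2_norm_eq_inner by (simp add: power2_eq_square)
  have phi_eq: "phi K (z u) = 2 * t / (1 + K * t\<^sup>2)" using phi_z(2) by simp
  have "t\<^sup>2 + (norm (sgrad (\<lambda>x. tK K (z x / 2)) u))\<^sup>2 = t\<^sup>2 * (1 + (g \<bullet> g) / (phi K (z u))\<^sup>2)"
    unfolding norm_sq phi_eq using t phi_z(1) by (simp add: field_simps power2_eq_square)
  then show ?thesis using t by (simp add: Wv_def real_sqrt_mult t_def g_def)
qed

lemma Acoef_Bcoef_rescale:
  fixes z :: "real^'n \<Rightarrow> real"
  assumes K: "K = -1 \<or> K = 1" and C2: "C2_sphere z" and u: "u \<in> sphere_n"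
    and z: "0 < z u" "K = 1 \<longrightarrow> z u < pi"
    and s: "s > 0" and sv: "K = -1 \<longrightarrow> s * tK K (z u / 2) < 1"
    and v: "v = (\<lambda>x. tK K (z x / 2))"
  shows "Acoef K s v u = phi K (z u) / phi K (rescale K s (z u))"
    and "Bcoef K s v u = (dphi K (rescale K s (z u)) - dphi K (z u)) /
           (phi K (rescale K s (z u)) * sqrt (1 + (sgrad z u \<bullet> sgrad z u) / (phi K (z u))\<^sup>2))"
proof -
  define t W where "t = tK K (z u / 2)" and "W = sqrt (1 + (sgrad z u \<bullet> sgrad z u) / (phi K (z u))\<^sup>2)"
  have half: "K = 1 \<longrightarrow> \<bar>z u / 2\<bar> < pi / 2" using z by auto
  have t: "t > 0" using tK_half_pos[OF K z] by (simp add: t_def)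
  have W: "W > 0" by (simp add: W_def add_pos_nonneg)
  have w: "K = -1 \<longrightarrow> \<bar>s * t\<bar> < 1" using sv s t by (auto simp: t_def)
  note phi_z = tK_half_angle[OF K half, folded t_def, simplified]
  note phi_R = phi_rescale[OF K w[unfolded t_def], folded t_def]
  have Acoef: "Acoef K s v u = (1 + K * (s * t)\<^sup>2) / (s * (1 + K * t\<^sup>2))"
    by (simp add: Acoef_def v t_def power_mult_distrib mult.assoc)
  have frac: "D' / (s * D) = (2 * t / D) / (2 * (s * t) / D')" if "D \<noteq> 0" "D' \<noteq> 0" for D D'
    using that t s by (simp add: field_simps)
  show "Acoef K s v u = phi K (z u) / phi K (rescale K s (z u))"
    unfolding Acoef phi_z(2) phi_R(2) by (rule frac) (use phi_z(1) phi_R(1) in auto)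
  have "Bcoef K s v u = K * ((1 - s\<^sup>2) * t\<^sup>2) / (s * (1 + K * t\<^sup>2) * (t * W))"
    using Wv_half_tan[OF K C2 u z] by (simp add: Bcoef_def v t_def W_def)
  also have "\<dots> = ((1 - K * (s * t)\<^sup>2) / (1 + K * (s * t)\<^sup>2) - (1 - K * t\<^sup>2) / (1 + K * t\<^sup>2)) /
                    (2 * (s * t) / (1 + K * (s * t)\<^sup>2) * W)"
  proof -
    have "(1 - K * (s * t)\<^sup>2) * (1 + K * t\<^sup>2) - (1 - K * t\<^sup>2) * (1 + K * (s * t)\<^sup>2) =
        2 * K * t\<^sup>2 * (1 - s\<^sup>2)"
      by (simp add: algebra_simps power2_eq_square)
    then show ?thesis
      using phi_z(1) phi_R(1) t s W by (simp add: divide_simps power2_eq_square)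
  qed
  also have "\<dots> = (dphi K (rescale K s (z u)) - dphi K (z u)) / (phi K (rescale K s (z u)) * W)"
    by (simp add: phi_z(3) phi_R(2,3))
  finally show "Bcoef K s v u = (dphi K (rescale K s (z u)) - dphi K (z u)) /
      (phi K (rescale K s (z u)) * sqrt (1 + (sgrad z u \<bullet> sgrad z u) / (phi K (z u))\<^sup>2))"
    by (simp add: W_def)
qed


lemma pcurv_rescale:
  fixes z :: "real^'n \<Rightarrow> real" and u :: "real^'n"
  assumes v: "v = (\<lambda>x. tK K (z x / 2))"
    and K: "K = -1 \<or> K = 1" and C2: "C2_sphere z"
    and z: "\<forall>x\<in>sphere_n. 0 < z x \<and> (K = 1 \<longrightarrow> z x < pi)"
    and s: "s > 0" and sv: "\<forall>x\<in>sphere_n. K = -1 \<longrightarrow> s * tK K (z x / 2) < 1"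
    and u: "u \<in> sphere_n" and lam: "lam \<in> pcurv K n z u"
  shows "(\<lambda>i. if i < n then Acoef K s v u * lam i + Bcoef K s v u else 0)
           \<in> pcurv K n (zof K (\<lambda>x. s * v x)) u"
proof -
  have ode: "phi K (z x) \<noteq> 0 \<and>
      (rescale K s has_real_derivative phi K (rescale K s (z x)) / phi K (z x)) (at (z x))"
    if "x \<in> sphere_n" for x
    using rescale_ode[OF K _ _ s, of "z x"] z sv that by auto
  have "phi K (rescale K s (z u)) \<noteq> 0"
    using rescale_ode(2)[OF K _ _ s, of "z u"] z sv u by auto
  note pcurv_G = pcurv_comp[OF C2 u ode this lam]
  have zof: "zof K (\<lambda>x. s * v x) = (\<lambda>x. rescale K s (z x))"
    unfolding v by (rule zof_scale)
  have "0 < z u" "K = 1 \<longrightarrow> z u < pi" "K = -1 \<longrightarrow> s * tK K (z u / 2) < 1" using z sv u by auto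
  note coefs = Acoef_Bcoef_rescale[OF K C2 u this(1,2) s this(3) v]
  show ?thesis unfolding zof coefs by (rule pcurv_G)
qed

text \<open>For \<open>s = 1\<close> the rescaling is the identity, so \<open>zof K v\<close> has the curvatures of \<open>z\<close>.\<close>
lemma curvatures_rescale:
  fixes z :: "real^'n \<Rightarrow> real" and u :: "real^'n"
  assumes v: "v = (\<lambda>x. tK K (z x / 2))"
    and dim: "CARD('n) = Suc n" and K: "K = -1 \<or> K = 1" and C2: "C2_sphere z"
    and z: "\<forall>x\<in>sphere_n. 0 < z x \<and> (K = 1 \<longrightarrow> z x < pi)"
    and s: "s > 0" and sv: "\<forall>x\<in>sphere_n. K = -1 \<longrightarrow> s * tK K (z x / 2) < 1"
    and u: "u \<in> sphere_n" and lam: "lam \<in> pcurv K n z u"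
  shows "curvS K n j (zof K v) u = esym n j lam"
    and "curvS K n j (zof K (\<lambda>x. s * v x)) u = esym n j (\<lambda>i. Acoef K s v u * lam i + Bcoef K s v u)"
proof -
  have "1 + K * (v u)\<^sup>2 > 0" using tK_half_angle(1)[OF K, of "z u / 2"] z u by (auto simp: v)
  then have "Acoef K 1 v u = 1" "Bcoef K 1 v u = 0" by (simp_all add: Acoef_def Bcoef_def)
  moreover have "(\<lambda>i. if i < n then lam i else 0) = lam"
    using lam by (auto simp: pcurv_def fun_eq_iff)
  moreover have "\<forall>x\<in>sphere_n. K = -1 \<longrightarrow> 1 * tK K (z x / 2) < 1"
    by (simp add: space_form_hyperbolic tanh_real_lt_1)
  ultimately have "lam \<in> pcurv K n (zof K v) u"
    using pcurv_rescale[OF v K C2 z zero_less_one _ u lam] by (simp only: mult_1 add_0_right)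
  moreover have phi_pos: "phi K (zof K (\<lambda>x. s' * v x) u) > 0"
    if "s' > 0" "\<forall>x\<in>sphere_n. K = -1 \<longrightarrow> s' * tK K (z x / 2) < 1" for s'
    using rescale_ode(2)[OF K _ _ that(1), of "z u"] that(2) z u by (simp add: v zof_scale)
  ultimately show "curvS K n j (zof K v) u = esym n j lam"
    using curvS_eq_esym[OF dim u] phi_pos[of 1] z u by (simp add: space_form_hyperbolic tanh_real_lt_1)
  have "curvS K n j (zof K (\<lambda>x. s * v x)) u =
      esym n j (\<lambda>i. if i < n then Acoef K s v u * lam i + Bcoef K s v u else 0)"
    using curvS_eq_esym[OF dim u _ pcurv_rescale[OF v K C2 z s sv u lam]] phi_pos[OF s sv] by simp
  also have "\<dots> = esym n j (\<lambda>i. Acoef K s v u * lam i + Bcoef K s v u)"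
    by (rule esym_cong) simp
  finally show "curvS K n j (zof K (\<lambda>x. s * v x)) u = esym n j (\<lambda>i. Acoef K s v u * lam i + Bcoef K s v u)" .
qed


lemma Acoef_Bcoef_sign:
  assumes v: "v = (\<lambda>x. tK K (z x / 2))" and K: "K = -1 \<or> K = 1"
    and z: "0 < z u" "K = 1 \<longrightarrow> z u < pi" and s: "s > 0" and sv: "s * v u < 1"
  shows "Acoef K s v u > 0"
    and "(K = -1 \<and> s \<ge> 1) \<or> (K = 1 \<and> s \<le> 1) \<Longrightarrow> Bcoef K s v u \<ge> 0"
proof -
  have t: "v u > 0" using tK_half_pos[OF K z] by (simp add: v)
  have "1 + K * (v u)\<^sup>2 > 0" using tK_half_angle(1)[OF K, of "z u / 2"] z by (auto simp: v)
  moreover have "K = -1 \<longrightarrow> \<bar>s * tK K (z u / 2)\<bar> < 1" using sv s t by (auto simp: v)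
  then have "1 + K * (s * v u)\<^sup>2 > 0" using phi_rescale(1)[OF K] by (simp add: v)
  ultimately show "Acoef K s v u > 0"
    using s by (simp add: Acoef_def power_mult_distrib mult.assoc)
  assume sign: "(K = -1 \<and> s \<ge> 1) \<or> (K = 1 \<and> s \<le> 1)"
  have "K * ((1 - s\<^sup>2) * (v u)\<^sup>2) \<ge> 0"
    using sign s by (auto simp: one_le_power power_le_one mult_nonpos_nonneg)
  moreover have "s * (1 + K * (v u)\<^sup>2) * Wv v u \<ge> 0"
    using s \<open>1 + K * (v u)\<^sup>2 > 0\<close> by (simp add: Wv_def)
  ultimately show "Bcoef K s v u \<ge> 0"
    unfolding Bcoef_def by (rule divide_nonneg_nonneg)
qed

lemma curvS_rescale_expansion:
  fixes z :: "real^'n \<Rightarrow> real" and u :: "real^'n"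
  assumes v: "v = (\<lambda>x. tK K (z x / 2))"
    and dim: "CARD('n) = Suc n" and K: "K = -1 \<or> K = 1" and C2: "C2_sphere z"
    and z: "\<forall>x\<in>sphere_n. 0 < z x \<and> (K = 1 \<longrightarrow> z x < pi / 2)"
    and adm: "admissible K n m z" and s: "s > 0" and sv: "\<forall>x\<in>sphere_n. s * tK K (z x / 2) < 1"
    and u: "u \<in> sphere_n"
  shows "curvS K n m (zof K (\<lambda>x. s * v x)) u =
           Acoef K s v u ^ m * curvS K n m (zof K v) u +
           (\<Sum>j<m. real ((n - j) choose (m - j)) * Acoef K s v u ^ j * Bcoef K s v u ^ (m - j)
                   * curvS K n j (zof K v) u)"
proof -
  from adm u obtain lam where lam: "lam \<in> pcurv K n z u"
    unfolding admissible_def by blast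
  have z': "\<forall>x\<in>sphere_n. 0 < z x \<and> (K = 1 \<longrightarrow> z x < pi)" using z by force
  have sv': "\<forall>x\<in>sphere_n. K = -1 \<longrightarrow> s * tK K (z x / 2) < 1" using sv by blast
  note curv = curvatures_rescale[OF v dim K C2 z' s sv' u lam]
  have "{..m} = insert m {..<m}" by auto
  then show ?thesis
    unfolding curv esym_affine by simp
qed

lemma curvS_rescale_ge:
  fixes z :: "real^'n \<Rightarrow> real" and u :: "real^'n"
  assumes v: "v = (\<lambda>x. tK K (z x / 2))"
    and dim: "CARD('n) = Suc n" and mn: "m \<le> n" and K: "K = -1 \<or> K = 1" and C2: "C2_sphere z"
    and z: "\<forall>x\<in>sphere_n. 0 < z x \<and> (K = 1 \<longrightarrow> z x < pi / 2)"
    and adm: "admissible K n m z" and s: "s > 0" and sv: "\<forall>x\<in>sphere_n. s * tK K (z x / 2) < 1"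
    and sign: "(K = -1 \<and> s \<ge> 1) \<or> (K = 1 \<and> s \<le> 1)"
    and u: "u \<in> sphere_n"
  shows "Acoef K s v u ^ m * curvS K n m (zof K v) u \<le> curvS K n m (zof K (\<lambda>x. s * v x)) u"
proof -
  from adm u obtain lam where lam: "lam \<in> pcurv K n z u" "lam \<in> Gamma n m"
    unfolding admissible_def by blast
  have z': "\<forall>x\<in>sphere_n. 0 < z x \<and> (K = 1 \<longrightarrow> z x < pi)" using z by force
  have sv': "\<forall>x\<in>sphere_n. K = -1 \<longrightarrow> s * tK K (z x / 2) < 1" using sv by blast
  have "0 < z u" "K = 1 \<longrightarrow> z u < pi" "s * v u < 1" using z' sv u by (auto simp: v)
  note coef = Acoef_Bcoef_sign[OF v K this(1,2) s this(3)]
  show ?thesis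
    using esym_affine_ge[OF lam(2) mn coef(1) coef(2)[OF sign]]
      curvatures_rescale[OF v dim K C2 z' s sv' u lam(1)] by simp
qed

lemma admissible_rescale:
  fixes z :: "real^'n \<Rightarrow> real"
  assumes v: "v = (\<lambda>x. tK K (z x / 2))"
    and mn: "m \<le> n" and K: "K = -1 \<or> K = 1" and C2: "C2_sphere z"
    and z: "\<forall>x\<in>sphere_n. 0 < z x \<and> (K = 1 \<longrightarrow> z x < pi / 2)"
    and adm: "admissible K n m z" and s: "s > 0" and sv: "\<forall>x\<in>sphere_n. s * tK K (z x / 2) < 1"
    and sign: "(K = -1 \<and> s \<ge> 1) \<or> (K = 1 \<and> s \<le> 1)"
  shows "admissible K n m (zof K (\<lambda>x. s * v x))"
  unfolding admissible_def
proof
  fix u :: "real^'n" assume u: "u \<in> sphere_n"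
  from adm u obtain lam where lam: "lam \<in> pcurv K n z u" "lam \<in> Gamma n m"
    unfolding admissible_def by blast
  have z': "\<forall>x\<in>sphere_n. 0 < z x \<and> (K = 1 \<longrightarrow> z x < pi)" using z by force
  have sv': "\<forall>x\<in>sphere_n. K = -1 \<longrightarrow> s * tK K (z x / 2) < 1" using sv by blast
  have "0 < z u" "K = 1 \<longrightarrow> z u < pi" "s * v u < 1" using z' sv u by (auto simp: v)
  note coef = Acoef_Bcoef_sign[OF v K this(1,2) s this(3)]
  show "\<exists>lam\<in>pcurv K n (zof K (\<lambda>x. s * v x)) u. lam \<in> Gamma n m"
    using pcurv_rescale[OF v K C2 z' s sv' u lam(1)] Gamma_affine[OF lam(2) mn coef(1) coef(2)[OF sign]]
    by blast
qed

theorem lemma2p1: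
  fixes n m :: nat
  assumes dim: "CARD('n) = Suc n"
    and m: "1 \<le> m" "m \<le> n"
  shows
   "(\<exists>c :: nat \<Rightarrow> real. (\<forall>j<m. c j > 0) \<and>
      (\<forall>K (z :: real^'n \<Rightarrow> real) s.
         (K = -1 \<or> K = 1) \<and> C2_sphere z \<and>
         (\<forall>u\<in>sphere_n. 0 < z u \<and> (K = 1 \<longrightarrow> z u < pi / 2)) \<and>
         admissible K n m z \<and> s > 0 \<and>
         (\<forall>u\<in>sphere_n. s * tK K (z u / 2) < 1)
         \<longrightarrow> (let v = (\<lambda>u. tK K (z u / 2)) in
              \<forall>u\<in>sphere_n.
                curvS K n m (zof K (\<lambda>x. s * v x)) u =
                  (Acoef K s v u) ^ m * curvS K n m (zof K v) u +
                  (\<Sum>j<m. c j * (Acoef K s v u) ^ j * (Bcoef K s v u) ^ (m - j)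
                              * curvS K n j (zof K v) u)))) \<and>
    (\<forall>K (z :: real^'n \<Rightarrow> real) s.
         (K = -1 \<or> K = 1) \<and> C2_sphere z \<and>
         (\<forall>u\<in>sphere_n. 0 < z u \<and> (K = 1 \<longrightarrow> z u < pi / 2)) \<and>
         admissible K n m z \<and> s > 0 \<and>
         (\<forall>u\<in>sphere_n. s * tK K (z u / 2) < 1) \<and>
         ((K = -1 \<and> s \<ge> 1) \<or> (K = 1 \<and> s \<le> 1))
         \<longrightarrow> (let v = (\<lambda>u. tK K (z u / 2)) in
              (\<forall>u\<in>sphere_n.
                 curvS K n m (zof K (\<lambda>x. s * v x)) u \<ge>
                   (Acoef K s v u) ^ m * curvS K n m (zof K v) u) \<and>
              admissible K n m (zof K (\<lambda>x. s * v x))))"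
proof -
  have c_pos: "real ((n - j) choose (m - j)) > 0" if "j < m" for j
    using that m by (simp add: diff_le_mono)
  show ?thesis
    unfolding Let_def
    by (intro conjI exI[of _ "\<lambda>j. real ((n - j) choose (m - j))"] allI impI ballI; (elim conjE)?;
        rule c_pos curvS_rescale_expansion[OF refl dim] curvS_rescale_ge[OF refl dim m(2)]
          admissible_rescale[OF refl m(2)];
        assumption)
qed

end
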